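(* If $R$ is an Artinian ring of finite Ext-index, then $R_\mathfrak{p}$ is of finite Ext-index for every prime ideal $\mathfrak{p}$ of $R$.
   Context: All rings are commutative Noetherian with unity. For a ring $A$ and nonzero $A$-modules $M,N$, set $p^A(M,N)=\sup\{i\in\mathbb{N} : \mathrm{Ext}^i_A(M,N)\neq 0\}\ (\leq\infty)$. The Ext-index of $A$ is $\mathrm{Ext}\text{-}\mathrm{index}(A)=\sup\{p^A(M,N) : M,N \text{ finitely generated } A\text{-modules with } p^A(M,N)<\infty\}$, and $A$ is of finite Ext-index if this is finite. *)

theory Defs
  imports "HOL-Algebra.Algebra" "HOL-Library.Extended_Nat"
begin

definition artinian_ring :: "('a, 'm) ring_scheme \<Rightarrow> bool" where
  "artinian_ring R \<longleftrightarrow> ring R \<and>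
     \<not> (\<exists>I :: nat \<Rightarrow> 'a set. \<forall>n. ideal (I n) R \<and> I (Suc n) \<subset> I n)"

definition loc_rel :: "('a, 'm) ring_scheme \<Rightarrow> 'a set \<Rightarrow> (('a \<times> 'a) \<times> ('a \<times> 'a)) set" where
  "loc_rel R P = {((a, s), (b, t)).
     a \<in> carrier R \<and> s \<in> carrier R - P \<and> b \<in> carrier R \<and> t \<in> carrier R - P \<and>
     (\<exists>u \<in> carrier R - P. u \<otimes>\<^bsub>R\<^esub> ((a \<otimes>\<^bsub>R\<^esub> t) \<ominus>\<^bsub>R\<^esub> (b \<otimes>\<^bsub>R\<^esub> s)) = \<zero>\<^bsub>R\<^esub>)}"

definition loc_mult :: "('a, 'm) ring_scheme \<Rightarrow> 'a set \<Rightarrow> ('a \<times> 'a) set \<Rightarrow> ('a \<times> 'a) set \<Rightarrow> ('a \<times> 'a) set" where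
  "loc_mult R P U V = (\<Union>((\<lambda>((a, s), (b, t)). loc_rel R P `` {(a \<otimes>\<^bsub>R\<^esub> b, s \<otimes>\<^bsub>R\<^esub> t)}) ` (U \<times> V)))"

definition loc_add :: "('a, 'm) ring_scheme \<Rightarrow> 'a set \<Rightarrow> ('a \<times> 'a) set \<Rightarrow> ('a \<times> 'a) set \<Rightarrow> ('a \<times> 'a) set" where
  "loc_add R P U V = (\<Union>((\<lambda>((a, s), (b, t)). loc_rel R P `` {((a \<otimes>\<^bsub>R\<^esub> t) \<oplus>\<^bsub>R\<^esub> (b \<otimes>\<^bsub>R\<^esub> s), s \<otimes>\<^bsub>R\<^esub> t)}) ` (U \<times> V)))"

definition localization :: "('a, 'm) ring_scheme \<Rightarrow> 'a set \<Rightarrow> ('a \<times> 'a) set ring" where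
  "localization R P =
    \<lparr> carrier = (carrier R \<times> (carrier R - P)) // loc_rel R P,
      monoid.mult = loc_mult R P,
      one = loc_rel R P `` {(\<one>\<^bsub>R\<^esub>, \<one>\<^bsub>R\<^esub>)},
      ring.zero = loc_rel R P `` {(\<zero>\<^bsub>R\<^esub>, \<one>\<^bsub>R\<^esub>)},
      ring.add = loc_add R P \<rparr>"

text \<open>Elements of the free module A^n are functions nat => carrier, zero from index n on.
A matrix with m rows and n columns is a function nat => nat => 'a and acts A^n -> A^m.\<close>

definition fvec :: "('a, 'm) ring_scheme \<Rightarrow> nat \<Rightarrow> (nat \<Rightarrow> 'a) set" where
  "fvec R n = {v. (\<forall>i<n. v i \<in> carrier R) \<and> (\<forall>i\<ge>n. v i = \<zero>\<^bsub>R\<^esub>)}"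

definition is_mat :: "('a, 'm) ring_scheme \<Rightarrow> nat \<Rightarrow> nat \<Rightarrow> (nat \<Rightarrow> nat \<Rightarrow> 'a) \<Rightarrow> bool" where
  "is_mat R m n D \<longleftrightarrow> (\<forall>i<m. \<forall>j<n. D i j \<in> carrier R)"

definition mv :: "('a, 'm) ring_scheme \<Rightarrow> nat \<Rightarrow> nat \<Rightarrow> (nat \<Rightarrow> nat \<Rightarrow> 'a) \<Rightarrow> (nat \<Rightarrow> 'a) \<Rightarrow> (nat \<Rightarrow> 'a)" where
  "mv R m n D v = (\<lambda>i. if i < m then (\<Oplus>\<^bsub>R\<^esub> j\<in>{..<n}. D i j \<otimes>\<^bsub>R\<^esub> v j) else \<zero>\<^bsub>R\<^esub>)"

definition mimg :: "('a, 'm) ring_scheme \<Rightarrow> nat \<Rightarrow> nat \<Rightarrow> (nat \<Rightarrow> nat \<Rightarrow> 'a) \<Rightarrow> (nat \<Rightarrow> 'a) set" where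
  "mimg R m n D = mv R m n D ` fvec R n"

definition vsub :: "('a, 'm) ring_scheme \<Rightarrow> (nat \<Rightarrow> 'a) \<Rightarrow> (nat \<Rightarrow> 'a) \<Rightarrow> (nat \<Rightarrow> 'a)" where
  "vsub R v w = (\<lambda>i. v i \<ominus>\<^bsub>R\<^esub> w i)"

text \<open>A free resolution by finitely generated free modules
  ... -> A^(r 2) --d 1--> A^(r 1) --d 0--> A^(r 0) -> M -> 0 ,
  where d k is an (r k) x (r (k+1)) matrix and M = coker (d 0).
Since A is Noetherian, every finitely generated module M admits such a resolution,
and every such resolution determines the finitely generated module coker (d 0).\<close>
definition free_resolution :: "('a, 'm) ring_scheme \<Rightarrow> (nat \<Rightarrow> nat) \<Rightarrow> (nat \<Rightarrow> nat \<Rightarrow> nat \<Rightarrow> 'a) \<Rightarrow> bool" where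
  "free_resolution R r d \<longleftrightarrow>
     (\<forall>k. is_mat R (r k) (r (Suc k)) (d k)) \<and>
     (\<forall>k. {v \<in> fvec R (r (Suc k)). mv R (r k) (r (Suc k)) (d k) v = (\<lambda>_. \<zero>\<^bsub>R\<^esub>)}
          = mimg R (r (Suc k)) (r (Suc (Suc k))) (d (Suc k)))"

definition res_nonzero :: "('a, 'm) ring_scheme \<Rightarrow> (nat \<Rightarrow> nat) \<Rightarrow> (nat \<Rightarrow> nat \<Rightarrow> nat \<Rightarrow> 'a) \<Rightarrow> bool" where
  "res_nonzero R r d \<longleftrightarrow> mimg R (r 0) (r 1) (d 0) \<noteq> fvec R (r 0)"

text \<open>A finitely generated module N is presented as N = A^p / image(psi),
with psi a p x q matrix. N is nonzero iff the image is proper.\<close>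
definition pres_nonzero :: "('a, 'm) ring_scheme \<Rightarrow> nat \<Rightarrow> nat \<Rightarrow> (nat \<Rightarrow> nat \<Rightarrow> 'a) \<Rightarrow> bool" where
  "pres_nonzero R p q \<psi> \<longleftrightarrow> is_mat R p q \<psi> \<and> mimg R p q \<psi> \<noteq> fvec R p"

text \<open>Hom(A^n, N) is identified with N^n: a cochain is a family u j (j < n) of
representatives in A^p of elements of N = A^p / image(psi).
The coboundary Hom(F_k,N) -> Hom(F_(k+1),N), f |-> f o d k, reads
(delta u) l = sum_j (d k j l) * u j.\<close>

definition cochain :: "('a, 'm) ring_scheme \<Rightarrow> nat \<Rightarrow> nat \<Rightarrow> (nat \<Rightarrow> nat \<Rightarrow> 'a) set" where
  "cochain R p n = {u. \<forall>j<n. u j \<in> fvec R p}"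

definition cobdry :: "('a, 'm) ring_scheme \<Rightarrow> nat \<Rightarrow> (nat \<Rightarrow> nat \<Rightarrow> 'a) \<Rightarrow> (nat \<Rightarrow> nat \<Rightarrow> 'a) \<Rightarrow> (nat \<Rightarrow> nat \<Rightarrow> 'a)" where
  "cobdry R n D u = (\<lambda>l i. \<Oplus>\<^bsub>R\<^esub> j\<in>{..<n}. D j l \<otimes>\<^bsub>R\<^esub> u j i)"

text \<open>Ext^k_A(M,N) \<noteq> 0, computed as the k-th cohomology of Hom(F,N).\<close>
definition ext_nonzero :: "('a, 'm) ring_scheme \<Rightarrow> (nat \<Rightarrow> nat) \<Rightarrow> (nat \<Rightarrow> nat \<Rightarrow> nat \<Rightarrow> 'a)
    \<Rightarrow> nat \<Rightarrow> nat \<Rightarrow> (nat \<Rightarrow> nat \<Rightarrow> 'a) \<Rightarrow> nat \<Rightarrow> bool" where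
  "ext_nonzero R r d p q \<psi> k \<longleftrightarrow>
     (\<exists>u \<in> cochain R p (r k).
        (\<forall>l < r (Suc k). cobdry R (r k) (d k) u l \<in> mimg R p q \<psi>) \<and>
        \<not> (case k of
              0 \<Rightarrow> (\<forall>j < r 0. u j \<in> mimg R p q \<psi>)
            | Suc k' \<Rightarrow> (\<exists>w \<in> cochain R p (r k').
                 \<forall>j < r k. vsub R (u j) (cobdry R (r k') (d k') w j) \<in> mimg R p q \<psi>)))"

definition ext_sup :: "('a, 'm) ring_scheme \<Rightarrow> (nat \<Rightarrow> nat) \<Rightarrow> (nat \<Rightarrow> nat \<Rightarrow> nat \<Rightarrow> 'a)
    \<Rightarrow> nat \<Rightarrow> nat \<Rightarrow> (nat \<Rightarrow> nat \<Rightarrow> 'a) \<Rightarrow> enat" where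
  "ext_sup R r d p q \<psi> = Sup (enat ` {k. ext_nonzero R r d p q \<psi> k})"

definition ext_index :: "('a, 'm) ring_scheme \<Rightarrow> enat" where
  "ext_index R = Sup {ext_sup R r d p q \<psi> | r d p q \<psi>.
      free_resolution R r d \<and> res_nonzero R r d \<and> pres_nonzero R p q \<psi> \<and>
      ext_sup R r d p q \<psi> < \<infinity>}"

definition finite_ext_index :: "('a, 'm) ring_scheme \<Rightarrow> bool" where
  "finite_ext_index R \<longleftrightarrow> ext_index R < \<infinity>"

end

theory Submission
  imports Defs
begin

text \<open>Let \<open>s \<notin> P\<close> annihilate the (finitely generated) kernel of \<open>R \<rightarrow> R\<^sub>P\<close>.  As \<open>R\<close> is Artinian,
  \<open>s\<^sup>n = s\<^sup>n s t\<close> for some \<open>n\<close> and \<open>t\<close>, and \<open>e = (s t)\<^sup>n\<close> is an idempotent with \<open>R\<^sub>P \<cong> e R\<close>;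
  so \<open>R \<cong> R\<^sub>P \<times> (1 - e) R\<close>.  Along this direct factor, finitely generated \<open>R\<^sub>P\<close>-modules are
  finitely generated \<open>R\<close>-modules with the same Ext: a free resolution over \<open>R\<^sub>P\<close> lifts to one over
  \<open>R\<close> once it is padded with trivial complexes, and the complementary factor only contributes split
  exact pieces.  Hence every finite value of \<open>p(M, N)\<close> over \<open>R\<^sub>P\<close> is also attained over \<open>R\<close>,
  and \<open>Ext-index(R\<^sub>P) \<le> Ext-index(R)\<close>.\<close>

section \<open>Localization of an Artinian ring at a prime ideal\<close>

lemma cring_hom_image:
  fixes R :: "('a, 'm) ring_scheme" and S :: "('b, 'n) ring_scheme"
  assumes R: "cring R" and car: "carrier S = h ` carrier R"
    and add: "\<And>x y. x \<in> carrier R \<Longrightarrow> y \<in> carrier R \<Longrightarrow> h (x \<oplus>\<^bsub>R\<^esub> y) = h x \<oplus>\<^bsub>S\<^esub> h y"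
    and mult: "\<And>x y. x \<in> carrier R \<Longrightarrow> y \<in> carrier R \<Longrightarrow> h (x \<otimes>\<^bsub>R\<^esub> y) = h x \<otimes>\<^bsub>S\<^esub> h y"
    and one: "h \<one>\<^bsub>R\<^esub> = \<one>\<^bsub>S\<^esub>" and zero: "h \<zero>\<^bsub>R\<^esub> = \<zero>\<^bsub>S\<^esub>"
  shows "cring S" "h \<in> ring_hom R S"
proof -
  interpret R: cring R by (rule R)
  have img: "h x \<in> carrier S" if "x \<in> carrier R" for x
    using that car by blast
  note simps = add[symmetric] mult[symmetric] one[symmetric] zero[symmetric] img
    R.a_ac R.m_ac R.l_distr R.r_distr
  show "cring S"
  proof (rule cringI)
    show "abelian_group S"
    proof (rule abelian_groupI, unfold car)
      fix x assume "x \<in> h ` carrier R"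
      then obtain a where "a \<in> carrier R" "x = h a" by blast
      then show "\<exists>y\<in>h ` carrier R. y \<oplus>\<^bsub>S\<^esub> x = \<zero>\<^bsub>S\<^esub>"
        by (intro bexI[of _ "h (\<ominus>\<^bsub>R\<^esub> a)"]) (auto simp: simps R.r_neg)
    qed (auto simp: simps)
    show "comm_monoid S"
      by (rule comm_monoidI, unfold car) (auto simp: simps)
  qed (unfold car, auto simp: simps)
  show "h \<in> ring_hom R S"
    by (rule ring_hom_memI) (auto simp: img add mult one)
qed

lemma (in monoid) pow_absorb:
  assumes "x \<in> carrier G" "y \<in> carrier G" "x \<otimes> y = x"
  shows "x \<otimes> y [^] (n::nat) = x"
proof (induction n)
  case (Suc n)
  then show ?case using assms by (simp add: m_assoc[symmetric])
qed (use assms in simp)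

lemma (in cring) artinian_pow_stable:
  assumes art: "artinian_ring R" and s: "s \<in> carrier R"
  shows "\<exists>n::nat. \<exists>t \<in> carrier R. s [^] n \<otimes> (s \<otimes> t) = s [^] n"
proof (rule ccontr)
  assume no_stable: "\<not> ?thesis"
  define I where "I n = PIdl (s [^] (n::nat))" for n
  have "ideal (I n) R \<and> I (Suc n) \<subset> I n" for n
  proof -
    have "I (Suc n) \<subseteq> I n"
    proof
      fix z assume "z \<in> I (Suc n)"
      then obtain x where x: "x \<in> carrier R" "z = x \<otimes> s [^] Suc n" unfolding I_def cgenideal_def by auto
      then have "z = (x \<otimes> s) \<otimes> s [^] n" using s by (simp add: m_comm[of "s [^] n" s] m_assoc)
      then show "z \<in> I n" unfolding I_def cgenideal_def using x s by blast
    qed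
    moreover have "s [^] n \<notin> I (Suc n)"
    proof
      assume "s [^] n \<in> I (Suc n)"
      then obtain t where t: "t \<in> carrier R" "s [^] n = t \<otimes> s [^] Suc n"
        unfolding I_def cgenideal_def by blast
      moreover have "t \<otimes> s [^] Suc n = s [^] n \<otimes> (s \<otimes> t)"
        using s t(1) by (simp add: m_comm[of t] m_assoc)
      ultimately have "s [^] n \<otimes> (s \<otimes> t) = s [^] n" by simp
      then show False using no_stable t(1) by blast
    qed
    moreover have "s [^] n \<in> I n" unfolding I_def using s by (simp add: cgenideal_self)
    ultimately show ?thesis unfolding I_def using cgenideal_ideal s by auto
  qed
  then show False using art unfolding artinian_ring_def by blast
qed

lemma (in cring) stable_power_idempotent:
  assumes s: "s \<in> carrier R" and t: "t \<in> carrier R" and st: "s [^] n \<otimes> (s \<otimes> t) = s [^] (n::nat)"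
  shows "(s \<otimes> t) [^] n \<otimes> (s \<otimes> t) [^] n = (s \<otimes> t) [^] n"
    and "(s \<otimes> t) [^] n \<otimes> s [^] n = s [^] n"
    and "x \<in> carrier R \<Longrightarrow> s \<otimes> x = \<zero> \<Longrightarrow> (s \<otimes> t) [^] n \<otimes> x = \<zero>"
proof -
  define p where "p = s [^] n"
  define q where "q = t [^] n"
  define e where "e = (s \<otimes> t) [^] n"
  have c: "p \<in> carrier R" "q \<in> carrier R" using s t unfolding p_def q_def by auto
  have e: "e = p \<otimes> q" unfolding e_def p_def q_def using s t by (simp add: nat_pow_distrib)
  have "e \<otimes> p = p \<otimes> (s \<otimes> t) [^] n"
    unfolding e_def by (rule m_comm) (use c s t in auto)
  also have "\<dots> = p"
    by (rule pow_absorb) (use c s t st in \<open>auto simp: p_def\<close>)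
  finally have ep: "e \<otimes> p = p" .
  then show "e \<otimes> p = p" .
  have "e \<otimes> e = q \<otimes> (e \<otimes> p)"
    using c unfolding e by algebra
  also have "\<dots> = q \<otimes> p" by (simp only: ep)
  also have "\<dots> = e"
    unfolding e by (rule m_comm[OF c(2,1)])
  finally show "e \<otimes> e = e" .
  assume x: "x \<in> carrier R" and sx: "s \<otimes> x = \<zero>"
  have "p \<otimes> x = (p \<otimes> (s \<otimes> t)) \<otimes> x" by (simp only: p_def st)
  also have "\<dots> = (p \<otimes> t) \<otimes> (s \<otimes> x)" using c s t x by algebra
  finally have px: "p \<otimes> x = \<zero>" using sx c t by simp
  have "e \<otimes> x = q \<otimes> (p \<otimes> x)" unfolding e using c x by algebra
  then show "e \<otimes> x = \<zero>" using px c by simp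
qed

lemma (in cring) annihilator_ideal:
  assumes u: "u \<in> carrier R"
  shows "ideal {x \<in> carrier R. u \<otimes> x = \<zero>} R"
proof (intro subgroup.intro idealI[OF ring_axioms])
  show "\<And>x. x \<in> {x \<in> carrier R. u \<otimes> x = \<zero>} \<Longrightarrow> inv\<^bsub>add_monoid R\<^esub> x \<in> {x \<in> carrier R. u \<otimes> x = \<zero>}"
    using u by (simp add: a_inv_def[symmetric] r_minus)
  show "\<And>a x. a \<in> {x \<in> carrier R. u \<otimes> x = \<zero>} \<Longrightarrow> x \<in> carrier R \<Longrightarrow> x \<otimes> a \<in> {x \<in> carrier R. u \<otimes> x = \<zero>}"
    using u by (simp add: m_lcomm)
  show "\<And>a x. a \<in> {x \<in> carrier R. u \<otimes> x = \<zero>} \<Longrightarrow> x \<in> carrier R \<Longrightarrow> a \<otimes> x \<in> {x \<in> carrier R. u \<otimes> x = \<zero>}"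
    using u by (simp add: m_assoc[symmetric])
qed (use u in \<open>auto simp: r_distr\<close>)

locale artinian_localization = primeideal P R for P and R (structure) +
  assumes artinian: "artinian_ring R" and noetherian: "noetherian_ring R"
begin

abbreviation S where "S \<equiv> localization R P"

lemma compl_mult_closed: "a \<in> carrier R - P \<Longrightarrow> b \<in> carrier R - P \<Longrightarrow> a \<otimes> b \<in> carrier R - P"
  using I_prime by auto

lemma one_compl: "\<one> \<in> carrier R - P"
  using I_notcarr one_imp_carrier by auto

lemma pow_compl: "s \<in> carrier R - P \<Longrightarrow> s [^] (n::nat) \<in> carrier R - P"
proof (induction n)
  case (Suc n)
  then show ?case using compl_mult_closed[of "s [^] n" s] by simp
qed (use one_compl in simp)

lemma loc_rel_iff: "((a, s), (b, t)) \<in> loc_rel R P \<longleftrightarrow>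
     a \<in> carrier R \<and> s \<in> carrier R - P \<and> b \<in> carrier R \<and> t \<in> carrier R - P \<and>
     (\<exists>u \<in> carrier R - P. u \<otimes> ((a \<otimes> t) \<ominus> (b \<otimes> s)) = \<zero>)"
  unfolding loc_rel_def by auto

lemma loc_rel_equiv: "equiv (carrier R \<times> (carrier R - P)) (loc_rel R P)"
proof (rule equivI)
  show "refl_on (carrier R \<times> (carrier R - P)) (loc_rel R P)"
  proof (rule refl_onI)
    fix x assume "x \<in> carrier R \<times> (carrier R - P)"
    then obtain a s where x: "x = (a, s)" "a \<in> carrier R" "s \<in> carrier R - P" by auto
    have "\<one> \<otimes> ((a \<otimes> s) \<ominus> (a \<otimes> s)) = \<zero>" using x by (simp add: r_neg minus_eq)
    then show "(x, x) \<in> loc_rel R P" unfolding x(1) loc_rel_iff using x one_compl by blast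
  qed
  show "sym (loc_rel R P)"
  proof (rule symI)
    fix x y assume "(x, y) \<in> loc_rel R P"
    then obtain a s b t u where xy: "x = (a, s)" "y = (b, t)" "a \<in> carrier R" "s \<in> carrier R - P"
      "b \<in> carrier R" "t \<in> carrier R - P" "u \<in> carrier R - P" "u \<otimes> ((a \<otimes> t) \<ominus> (b \<otimes> s)) = \<zero>"
      unfolding loc_rel_def by auto
    have "a \<in> carrier R" "s \<in> carrier R" "b \<in> carrier R" "t \<in> carrier R" "u \<in> carrier R"
      using xy by auto
    then have "u \<otimes> ((b \<otimes> s) \<ominus> (a \<otimes> t)) = \<ominus> (u \<otimes> ((a \<otimes> t) \<ominus> (b \<otimes> s)))"
      by algebra
    then show "(y, x) \<in> loc_rel R P" unfolding xy(1,2) loc_rel_iff using xy by auto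
  qed
  show "trans (loc_rel R P)"
  proof (rule transI)
    fix x y z assume "(x, y) \<in> loc_rel R P" "(y, z) \<in> loc_rel R P"
    then obtain a s b t c w u v where xyz: "x = (a, s)" "y = (b, t)" "z = (c, w)" "a \<in> carrier R"
      "s \<in> carrier R - P" "b \<in> carrier R" "t \<in> carrier R - P" "c \<in> carrier R" "w \<in> carrier R - P"
      "u \<in> carrier R - P" "u \<otimes> ((a \<otimes> t) \<ominus> (b \<otimes> s)) = \<zero>"
      "v \<in> carrier R - P" "v \<otimes> ((b \<otimes> w) \<ominus> (c \<otimes> t)) = \<zero>"
      unfolding loc_rel_def by auto
    have "a \<in> carrier R" "s \<in> carrier R" "b \<in> carrier R" "t \<in> carrier R" "c \<in> carrier R"
      "w \<in> carrier R" "u \<in> carrier R" "v \<in> carrier R"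
      using xyz by auto
    then have "(u \<otimes> v \<otimes> t) \<otimes> ((a \<otimes> w) \<ominus> (c \<otimes> s))
        = v \<otimes> w \<otimes> (u \<otimes> ((a \<otimes> t) \<ominus> (b \<otimes> s))) \<oplus> u \<otimes> s \<otimes> (v \<otimes> ((b \<otimes> w) \<ominus> (c \<otimes> t)))"
      by algebra
    also have "\<dots> = \<zero>" using xyz by simp
    finally show "(x, z) \<in> loc_rel R P"
      unfolding xyz(1,3) loc_rel_iff using xyz compl_mult_closed by blast
  qed
qed (auto simp: loc_rel_def)

definition loc_map :: "'a \<Rightarrow> ('a \<times> 'a) set" where
  "loc_map x = loc_rel R P `` {(x, \<one>)}"

lemma loc_map_mem_iff: "(a, s) \<in> loc_map x \<longleftrightarrow> ((x, \<one>), (a, s)) \<in> loc_rel R P"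
  by (simp add: loc_map_def)

lemma loc_map_eq_iff:
  assumes "x \<in> carrier R" "y \<in> carrier R"
  shows "loc_map x = loc_map y \<longleftrightarrow> (\<exists>u \<in> carrier R - P. u \<otimes> (x \<ominus> y) = \<zero>)"
proof -
  have "loc_map x = loc_map y \<longleftrightarrow> ((x, \<one>), (y, \<one>)) \<in> loc_rel R P"
    unfolding loc_map_def using eq_equiv_class_iff[OF loc_rel_equiv] assms one_compl by auto
  then show ?thesis
    unfolding loc_rel_iff using assms one_compl by simp
qed

lemma loc_class_eq_loc_map:
  "((x, \<one>), w) \<in> loc_rel R P \<Longrightarrow> loc_rel R P `` {w} = loc_map x"
  unfolding loc_map_def by (rule equiv_class_eq[OF loc_rel_equiv, symmetric])

lemma loc_map_self: "x \<in> carrier R \<Longrightarrow> (x, \<one>) \<in> loc_map x"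
  unfolding loc_map_def using equiv_class_self[OF loc_rel_equiv] one_compl by auto

text \<open>Since \<open>R\<close> is Artinian, \<open>s\<^sup>n = s\<^sup>n s t\<close> for some \<open>n\<close> and \<open>t\<close>; as \<open>s\<^sup>n \<notin> P\<close>, the fraction
  \<open>a / s\<close> equals \<open>a t / 1\<close>.\<close>
lemma loc_class_in_range:
  assumes a: "a \<in> carrier R" and s: "s \<in> carrier R - P"
  shows "\<exists>x \<in> carrier R. loc_rel R P `` {(a, s)} = loc_map x"
proof -
  have "s \<in> carrier R" using s by simp
  then obtain n :: nat and t where t: "t \<in> carrier R" "s [^] n \<otimes> (s \<otimes> t) = s [^] n"
    using artinian_pow_stable[OF artinian] by blast
  define p where "p = s [^] n"
  have p: "p \<in> carrier R - P" using pow_compl s unfolding p_def by blast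
  have "s \<in> carrier R" "p \<in> carrier R" using s p by auto
  then have "p \<otimes> ((a \<otimes> t) \<otimes> s \<ominus> a \<otimes> \<one>) = a \<otimes> (p \<otimes> (s \<otimes> t)) \<ominus> a \<otimes> p"
    using a t by algebra
  also have "\<dots> = \<zero>" using t a p unfolding p_def by (simp add: r_neg minus_eq)
  finally have "((a \<otimes> t, \<one>), (a, s)) \<in> loc_rel R P"
    unfolding loc_rel_iff using p a s t one_compl by blast
  then have "loc_rel R P `` {(a, s)} = loc_map (a \<otimes> t)" by (rule loc_class_eq_loc_map)
  then show ?thesis using a t by blast
qed

lemma carrier_localization: "carrier S = loc_map ` carrier R"
proof
  show "carrier S \<subseteq> loc_map ` carrier R"
  proof
    fix Y assume "Y \<in> carrier S"
    then have "Y \<in> (carrier R \<times> (carrier R - P)) // loc_rel R P" by (simp add: localization_def)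
    then obtain z where "Y = loc_rel R P `` {z}" "z \<in> carrier R \<times> (carrier R - P)" by (rule quotientE)
    then show "Y \<in> loc_map ` carrier R" using loc_class_in_range by fastforce
  qed
  show "loc_map ` carrier R \<subseteq> carrier S"
    unfolding localization_def loc_map_def using one_compl by (auto intro: quotientI)
qed

lemma loc_class_op:
  assumes x: "x \<in> carrier R" and y: "y \<in> carrier R"
    and rel: "\<And>a s b t. (a, s) \<in> loc_map x \<Longrightarrow> (b, t) \<in> loc_map y \<Longrightarrow> ((z, \<one>), g a s b t) \<in> loc_rel R P"
  shows "(\<Union>((\<lambda>((a, s), (b, t)). loc_rel R P `` {g a s b t}) ` (loc_map x \<times> loc_map y))) = loc_map z"
    (is "\<Union>(?F ` _) = _")
proof -
  have classes: "loc_rel R P `` {g a s b t} = loc_map z" if "(a, s) \<in> loc_map x" "(b, t) \<in> loc_map y" for a s b t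
    by (rule loc_class_eq_loc_map[OF rel[OF that]])
  have "?F ` (loc_map x \<times> loc_map y) = (\<lambda>_. loc_map z) ` (loc_map x \<times> loc_map y)"
  proof (rule image_cong)
    fix p assume "p \<in> loc_map x \<times> loc_map y"
    then obtain a s b t where "p = ((a, s), (b, t))" "(a, s) \<in> loc_map x" "(b, t) \<in> loc_map y" by auto
    then show "?F p = loc_map z" using classes by simp
  qed simp
  also have "\<dots> = {loc_map z}"
    using loc_map_self[OF x] loc_map_self[OF y] by (intro image_constant[of "((x, \<one>), (y, \<one>))"]) simp
  finally show ?thesis by simp
qed

lemma loc_rel_add:
  assumes x: "x \<in> carrier R" and y: "y \<in> carrier R"
    and h1: "((x, \<one>), (a, s)) \<in> loc_rel R P" and h2: "((y, \<one>), (b, t)) \<in> loc_rel R P"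
  shows "((x \<oplus> y, \<one>), ((a \<otimes> t) \<oplus> (b \<otimes> s), s \<otimes> t)) \<in> loc_rel R P"
proof -
  obtain u where u: "u \<in> carrier R - P" "u \<otimes> (x \<otimes> s \<ominus> a \<otimes> \<one>) = \<zero>" and c1: "a \<in> carrier R" "s \<in> carrier R - P"
    using h1 unfolding loc_rel_iff by blast
  obtain v where v: "v \<in> carrier R - P" "v \<otimes> (y \<otimes> t \<ominus> b \<otimes> \<one>) = \<zero>" and c2: "b \<in> carrier R" "t \<in> carrier R - P"
    using h2 unfolding loc_rel_iff by blast
  have c: "u \<in> carrier R" "v \<in> carrier R" "s \<in> carrier R" "t \<in> carrier R" using u v c1 c2 by auto
  have "(u \<otimes> v) \<otimes> ((x \<oplus> y) \<otimes> (s \<otimes> t) \<ominus> ((a \<otimes> t) \<oplus> (b \<otimes> s)) \<otimes> \<one>)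
      = v \<otimes> t \<otimes> (u \<otimes> (x \<otimes> s \<ominus> a \<otimes> \<one>)) \<oplus> u \<otimes> s \<otimes> (v \<otimes> (y \<otimes> t \<ominus> b \<otimes> \<one>))"
    using c c1 c2 x y by algebra
  also have "\<dots> = \<zero>" using u v c by simp
  finally show ?thesis unfolding loc_rel_iff using u v c1 c2 x y compl_mult_closed one_compl by auto
qed

lemma loc_rel_mult:
  assumes x: "x \<in> carrier R" and y: "y \<in> carrier R"
    and h1: "((x, \<one>), (a, s)) \<in> loc_rel R P" and h2: "((y, \<one>), (b, t)) \<in> loc_rel R P"
  shows "((x \<otimes> y, \<one>), (a \<otimes> b, s \<otimes> t)) \<in> loc_rel R P"
proof -
  obtain u where u: "u \<in> carrier R - P" "u \<otimes> (x \<otimes> s \<ominus> a \<otimes> \<one>) = \<zero>" and c1: "a \<in> carrier R" "s \<in> carrier R - P"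
    using h1 unfolding loc_rel_iff by blast
  obtain v where v: "v \<in> carrier R - P" "v \<otimes> (y \<otimes> t \<ominus> b \<otimes> \<one>) = \<zero>" and c2: "b \<in> carrier R" "t \<in> carrier R - P"
    using h2 unfolding loc_rel_iff by blast
  have c: "u \<in> carrier R" "v \<in> carrier R" "s \<in> carrier R" "t \<in> carrier R" using u v c1 c2 by auto
  have "(u \<otimes> v) \<otimes> ((x \<otimes> y) \<otimes> (s \<otimes> t) \<ominus> (a \<otimes> b) \<otimes> \<one>)
      = v \<otimes> y \<otimes> t \<otimes> (u \<otimes> (x \<otimes> s \<ominus> a \<otimes> \<one>)) \<oplus> u \<otimes> a \<otimes> (v \<otimes> (y \<otimes> t \<ominus> b \<otimes> \<one>))"
    using c c1 c2 x y by algebra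
  also have "\<dots> = \<zero>" using u v c c1 x y by simp
  finally show ?thesis unfolding loc_rel_iff using u v c1 c2 x y compl_mult_closed one_compl by auto
qed

lemma loc_map_add:
  assumes "x \<in> carrier R" "y \<in> carrier R"
  shows "loc_map (x \<oplus> y) = loc_map x \<oplus>\<^bsub>S\<^esub> loc_map y"
proof -
  have "loc_add R P (loc_map x) (loc_map y) = loc_map (x \<oplus> y)"
    unfolding loc_add_def by (rule loc_class_op) (use assms loc_rel_add in \<open>auto simp: loc_map_mem_iff\<close>)
  then show ?thesis by (simp add: localization_def)
qed

lemma loc_map_mult:
  assumes "x \<in> carrier R" "y \<in> carrier R"
  shows "loc_map (x \<otimes> y) = loc_map x \<otimes>\<^bsub>S\<^esub> loc_map y"
proof -
  have "loc_mult R P (loc_map x) (loc_map y) = loc_map (x \<otimes> y)"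
    unfolding loc_mult_def by (rule loc_class_op) (use assms loc_rel_mult in \<open>auto simp: loc_map_mem_iff\<close>)
  then show ?thesis by (simp add: localization_def)
qed

lemma loc_map_one: "loc_map \<one> = \<one>\<^bsub>S\<^esub>"
  by (simp add: localization_def loc_map_def)

lemma loc_map_zero: "loc_map \<zero> = \<zero>\<^bsub>S\<^esub>"
  by (simp add: localization_def loc_map_def)

lemma cring_localization: "cring S" and loc_map_ring_hom: "loc_map \<in> ring_hom R S"
  using cring_hom_image[OF is_cring carrier_localization loc_map_add loc_map_mult loc_map_one loc_map_zero]
  by auto

lemma finite_kernel_annihilated:
  assumes "finite A" "A \<subseteq> {x \<in> carrier R. loc_map x = \<zero>\<^bsub>S\<^esub>}"
  shows "\<exists>u \<in> carrier R - P. \<forall>a \<in> A. u \<otimes> a = \<zero>"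
  using assms
proof (induction A rule: finite_induct)
  case empty
  then show ?case using one_compl by blast
next
  case (insert b F)
  then obtain u where u: "u \<in> carrier R - P" "\<forall>a \<in> F. u \<otimes> a = \<zero>" by auto
  have b: "b \<in> carrier R" "loc_map b = loc_map \<zero>" using insert.prems loc_map_zero by auto
  then obtain v where v: "v \<in> carrier R - P" "v \<otimes> b = \<zero>"
    using loc_map_eq_iff[of b \<zero>] by (auto simp: minus_eq)
  have "(u \<otimes> v) \<otimes> a = \<zero>" if "a \<in> insert b F" for a
  proof (cases "a = b")
    case True
    then have "(u \<otimes> v) \<otimes> a = u \<otimes> (v \<otimes> b)" using u(1) v(1) b(1) by (simp add: m_assoc)
    then show ?thesis using v(2) u(1) by simp
  next
    case False
    then have a: "a \<in> F" "a \<in> carrier R" using that insert.prems by auto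
    then have "(u \<otimes> v) \<otimes> a = v \<otimes> (u \<otimes> a)" using u(1) v(1) by (simp add: m_assoc m_lcomm)
    then show ?thesis using u(2) a v(1) by simp
  qed
  then show ?case using compl_mult_closed[OF u(1) v(1)] by blast
qed

lemma kernel_annihilated:
  "\<exists>u \<in> carrier R - P. \<forall>x \<in> carrier R. loc_map x = \<zero>\<^bsub>S\<^esub> \<longrightarrow> u \<otimes> x = \<zero>"
proof -
  let ?K = "{x \<in> carrier R. loc_map x = \<zero>\<^bsub>S\<^esub>}"
  have "ring_hom_ring R S loc_map"
    by (rule ring_hom_ringI2[OF ring_axioms cring.axioms(1)[OF cring_localization] loc_map_ring_hom])
  moreover have "?K = a_kernel R S loc_map" unfolding a_kernel_def' ..
  ultimately have K: "ideal ?K R" using ring_hom_ring.kernel_is_ideal by simp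
  obtain A where A: "A \<subseteq> carrier R" "finite A" "?K = Idl A"
    using noetherian_ring.finetely_gen[OF noetherian K] by blast
  have "A \<subseteq> ?K" using A(3) genideal_self[OF A(1)] by blast
  then obtain u where u: "u \<in> carrier R - P" "\<forall>a \<in> A. u \<otimes> a = \<zero>"
    using finite_kernel_annihilated[OF A(2)] by blast
  have "Idl A \<subseteq> {x \<in> carrier R. u \<otimes> x = \<zero>}"
    by (rule genideal_minimal[OF annihilator_ideal]) (use u A(1) in auto)
  then show ?thesis using u A(3) by blast
qed

lemma localization_idempotent:
  obtains e where "e \<in> carrier R" "e \<otimes> e = e" "loc_map e = \<one>\<^bsub>S\<^esub>"
    "\<And>x. x \<in> carrier R \<Longrightarrow> loc_map x = \<zero>\<^bsub>S\<^esub> \<Longrightarrow> e \<otimes> x = \<zero>"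
proof -
  obtain s where s: "s \<in> carrier R - P" "\<And>x. x \<in> carrier R \<Longrightarrow> loc_map x = \<zero>\<^bsub>S\<^esub> \<Longrightarrow> s \<otimes> x = \<zero>"
    using kernel_annihilated by blast
  have sc: "s \<in> carrier R" using s(1) by simp
  then obtain n :: nat and t where t: "t \<in> carrier R" "s [^] n \<otimes> (s \<otimes> t) = s [^] n"
    using artinian_pow_stable[OF artinian] by blast
  define e where "e = (s \<otimes> t) [^] n"
  have e: "e \<in> carrier R" unfolding e_def using sc t(1) by simp
  note idem = stable_power_idempotent[OF sc t, folded e_def]
  have "e \<notin> P"
  proof
    assume "e \<in> P"
    then have "e \<otimes> s [^] n \<in> P" using sc by (intro I_r_closed) auto
    then show False using idem(2) pow_compl[OF s(1), of n] by simp
  qed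
  moreover have "e \<otimes> (e \<ominus> \<one>) = \<zero>" using idem(1) e by (simp add: minus_eq r_distr r_minus r_neg)
  ultimately have "loc_map e = loc_map \<one>"
    using e unfolding loc_map_eq_iff[OF e one_closed] by blast
  then show ?thesis using that[OF e idem(1)] idem(3) s(2) loc_map_one by simp
qed

end

section \<open>Matrices and the cochains computing Ext\<close>

definition vtrunc :: "('a, 'm) ring_scheme \<Rightarrow> nat \<Rightarrow> (nat \<Rightarrow> 'a) \<Rightarrow> (nat \<Rightarrow> 'a)" where
  "vtrunc R n v = (\<lambda>j. if j < n then v j else \<zero>\<^bsub>R\<^esub>)"

definition zero_ext :: "('a, 'm) ring_scheme \<Rightarrow> nat \<Rightarrow> (nat \<Rightarrow> nat \<Rightarrow> 'a) \<Rightarrow> (nat \<Rightarrow> nat \<Rightarrow> 'a)" where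
  "zero_ext R n u = (\<lambda>j. if j < n then u j else (\<lambda>_. \<zero>\<^bsub>R\<^esub>))"

definition ext_cocycle :: "('a, 'm) ring_scheme \<Rightarrow> (nat \<Rightarrow> nat) \<Rightarrow> (nat \<Rightarrow> nat \<Rightarrow> nat \<Rightarrow> 'a)
    \<Rightarrow> nat \<Rightarrow> nat \<Rightarrow> (nat \<Rightarrow> nat \<Rightarrow> 'a) \<Rightarrow> nat \<Rightarrow> (nat \<Rightarrow> nat \<Rightarrow> 'a) \<Rightarrow> bool" where
  "ext_cocycle R r d p q \<psi> k u \<longleftrightarrow> (\<forall>l < r (Suc k). cobdry R (r k) (d k) u l \<in> mimg R p q \<psi>)"

definition ext_coboundary :: "('a, 'm) ring_scheme \<Rightarrow> (nat \<Rightarrow> nat) \<Rightarrow> (nat \<Rightarrow> nat \<Rightarrow> nat \<Rightarrow> 'a)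
    \<Rightarrow> nat \<Rightarrow> nat \<Rightarrow> (nat \<Rightarrow> nat \<Rightarrow> 'a) \<Rightarrow> nat \<Rightarrow> (nat \<Rightarrow> nat \<Rightarrow> 'a) \<Rightarrow> bool" where
  "ext_coboundary R r d p q \<psi> k u \<longleftrightarrow> (case k of
      0 \<Rightarrow> (\<forall>j < r 0. u j \<in> mimg R p q \<psi>)
    | Suc k' \<Rightarrow> (\<exists>w \<in> cochain R p (r k').
        \<forall>j < r k. vsub R (u j) (cobdry R (r k') (d k') w j) \<in> mimg R p q \<psi>))"

lemma ext_nonzero_iff:
  "ext_nonzero R r d p q \<psi> k \<longleftrightarrow>
    (\<exists>u \<in> cochain R p (r k). ext_cocycle R r d p q \<psi> k u \<and> \<not> ext_coboundary R r d p q \<psi> k u)"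
  unfolding ext_nonzero_def ext_cocycle_def ext_coboundary_def ..

lemma ext_coboundary_cong:
  assumes "\<And>j. j < r k \<Longrightarrow> u j = u' j"
  shows "ext_coboundary R r d p q \<psi> k u \<longleftrightarrow> ext_coboundary R r d p q \<psi> k u'"
  unfolding ext_coboundary_def using assms by (cases k) auto

context cring
begin

lemma fvec_closed: "v \<in> fvec R n \<Longrightarrow> v i \<in> carrier R"
  unfolding fvec_def by (cases "i < n") auto

lemma zero_fvec: "(\<lambda>_. \<zero>) \<in> fvec R n"
  unfolding fvec_def by auto

lemma zero_ext_cochain: "u \<in> cochain R p n \<Longrightarrow> n \<le> n' \<Longrightarrow> zero_ext R n u \<in> cochain R p n'"
  unfolding cochain_def zero_ext_def using zero_fvec by auto

lemma vsub_fvec: "a \<in> fvec R p \<Longrightarrow> b \<in> fvec R p \<Longrightarrow> vsub R a b \<in> fvec R p"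
  unfolding fvec_def vsub_def by (auto simp: minus_eq)

lemma vsub_zero: "a \<in> fvec R p \<Longrightarrow> vsub R a (\<lambda>_. \<zero>) = a"
  unfolding vsub_def using fvec_closed by (auto simp: minus_eq)

lemma vsub_self: "a \<in> fvec R p \<Longrightarrow> vsub R a a = (\<lambda>_. \<zero>)"
  unfolding vsub_def using fvec_closed by (auto simp: minus_eq r_neg)

lemma vtrunc_fvec: "(\<And>j. j < n \<Longrightarrow> v j \<in> carrier R) \<Longrightarrow> vtrunc R n v \<in> fvec R n"
  unfolding vtrunc_def fvec_def by auto

lemma finsum_zero: "(\<And>j. j \<in> A \<Longrightarrow> g j = \<zero>) \<Longrightarrow> (\<Oplus>j\<in>A. g j) = \<zero>"
  by (intro add.finprod_one_eqI) auto

lemma finsum_prefix: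
  fixes m n :: nat
  assumes "m \<le> n" "\<And>j. j < m \<Longrightarrow> g j \<in> carrier R"
  shows "(\<Oplus>j\<in>{..<n}. if j < m then g j else \<zero>) = (\<Oplus>j\<in>{..<m}. g j)"
  by (rule add.finprod_mono_neutral_cong_right) (use assms in auto)

lemma finsum_unit:
  fixes n t :: nat
  assumes "t < n \<Longrightarrow> a \<in> carrier R"
  shows "(\<Oplus>j\<in>{..<n}. if j = t then a else \<zero>) = (if t < n then a else \<zero>)"
proof (cases "t < n")
  case True
  have "(\<Oplus>j\<in>{..<n}. if j = t then (\<lambda>_. a) j else \<zero>) = a"
    by (rule add.finprod_singleton_swap) (use True assms in auto)
  then show ?thesis using True by simp
qed (auto intro: finsum_zero)

lemma mv_fvec:
  assumes "is_mat R m n D" "\<And>j. j < n \<Longrightarrow> v j \<in> carrier R"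
  shows "mv R m n D v \<in> fvec R m"
  unfolding fvec_def mv_def using assms unfolding is_mat_def by (auto intro!: finsum_closed)

lemma mv_closed: "is_mat R m n D \<Longrightarrow> (\<And>j. j < n \<Longrightarrow> v j \<in> carrier R) \<Longrightarrow> mv R m n D v i \<in> carrier R"
  using mv_fvec fvec_closed by blast

lemma mv_vtrunc:
  assumes D: "is_mat R m n D" and v: "\<And>j. j < n \<Longrightarrow> v j \<in> carrier R"
  shows "mv R m n D (vtrunc R n v) = mv R m n D v"
  unfolding mv_def
proof (intro ext if_cong refl)
  fix i assume "i < m"
  then show "(\<Oplus>j\<in>{..<n}. D i j \<otimes> vtrunc R n v j) = (\<Oplus>j\<in>{..<n}. D i j \<otimes> v j)"
    by (intro finsum_cong') (use D v in \<open>auto simp: vtrunc_def is_mat_def\<close>)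
qed

lemma mv_in_mimg:
  assumes "is_mat R m n D" "\<And>j. j < n \<Longrightarrow> v j \<in> carrier R"
  shows "mv R m n D v \<in> mimg R m n D"
  unfolding mimg_def
  by (rule image_eqI[where x = "vtrunc R n v"]) (use mv_vtrunc[OF assms] vtrunc_fvec[OF assms(2)] in auto)

lemma mimg_subset: "is_mat R m n D \<Longrightarrow> mimg R m n D \<subseteq> fvec R m"
  unfolding mimg_def using mv_fvec fvec_closed by blast

lemma zero_mimg:
  assumes "is_mat R p q \<psi>"
  shows "(\<lambda>_. \<zero>) \<in> mimg R p q \<psi>"
proof -
  have "(\<Oplus>j\<in>{..<q}. \<psi> i j \<otimes> \<zero>) = \<zero>" if "i < p" for i
    by (rule finsum_zero) (use assms that in \<open>simp add: is_mat_def\<close>)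
  then have "mv R p q \<psi> (\<lambda>_. \<zero>) = (\<lambda>_. \<zero>)"
    unfolding mv_def by auto
  then show ?thesis using mv_in_mimg[OF assms, of "\<lambda>_. \<zero>"] by simp
qed

lemma cobdry_fvec:
  assumes u: "\<And>j. j < n \<Longrightarrow> u j \<in> fvec R p" and D: "\<And>j. j < n \<Longrightarrow> D j l \<in> carrier R"
  shows "cobdry R n D u l \<in> fvec R p"
  unfolding fvec_def cobdry_def
proof (intro CollectI conjI allI impI)
  fix i assume "p \<le> i"
  then have "\<And>j. j < n \<Longrightarrow> D j l \<otimes> u j i = \<zero>" using u D unfolding fvec_def by auto
  then show "(\<Oplus>j\<in>{..<n}. D j l \<otimes> u j i) = \<zero>" by (intro finsum_zero) auto
qed (use u D in \<open>auto intro!: finsum_closed m_closed intro: fvec_closed\<close>)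

lemma cobdry_cong:
  assumes eq: "\<And>j. j < n \<Longrightarrow> u j = u' j" and u': "\<And>j. j < n \<Longrightarrow> u' j \<in> fvec R p"
    and D: "\<And>j. j < n \<Longrightarrow> D j l \<in> carrier R"
  shows "cobdry R n D u l = cobdry R n D u' l"
  unfolding cobdry_def
  by (intro ext finsum_cong') (use eq u' D in \<open>auto intro!: m_closed intro: fvec_closed\<close>)

lemma ext_cocycle_cong:
  assumes d: "is_mat R (r k) (r (Suc k)) (d k)"
    and eq: "\<And>j. j < r k \<Longrightarrow> u j = u' j" and u': "u' \<in> cochain R p (r k)"
  shows "ext_cocycle R r d p q \<psi> k u \<longleftrightarrow> ext_cocycle R r d p q \<psi> k u'"
proof -
  have "cobdry R (r k) (d k) u l = cobdry R (r k) (d k) u' l" if "l < r (Suc k)" for l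
    by (rule cobdry_cong) (use eq u' d that in \<open>auto simp: cochain_def is_mat_def\<close>)
  then show ?thesis unfolding ext_cocycle_def by simp
qed

end

section \<open>Direct factors\<close>

text \<open>\<open>h\<close> is the projection of \<open>R \<cong> e R \<times> f R\<close> onto its direct factor \<open>S \<cong> e R\<close>, where \<open>f = 1 - e\<close>:
  an element of \<open>R\<close> is determined by its images under \<open>h\<close> and under multiplication by \<open>f\<close>.\<close>
locale direct_factor = ring_hom_cring R S h for R (structure) and S and h +
  fixes e
  assumes e_closed: "e \<in> carrier R" and e_idem: "e \<otimes> e = e" and h_e: "h e = \<one>\<^bsub>S\<^esub>"
    and e_kernel: "\<And>x. x \<in> carrier R \<Longrightarrow> h x = \<zero>\<^bsub>S\<^esub> \<Longrightarrow> e \<otimes> x = \<zero>"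
    and h_surj: "carrier S \<subseteq> h ` carrier R"
begin

definition lift :: "'c \<Rightarrow> 'a" where
  "lift a = e \<otimes> (SOME x. x \<in> carrier R \<and> h x = a)"

definition f :: 'a where
  "f = \<one> \<ominus> e"

definition vmap :: "(nat \<Rightarrow> 'a) \<Rightarrow> (nat \<Rightarrow> 'c)" where
  "vmap v = (\<lambda>i. h (v i))"

definition vlift :: "(nat \<Rightarrow> 'c) \<Rightarrow> (nat \<Rightarrow> 'a)" where
  "vlift a = (\<lambda>i. lift (a i))"

lemma some_preimage: "a \<in> carrier S \<Longrightarrow> (SOME x. x \<in> carrier R \<and> h x = a) \<in> carrier R \<and> h (SOME x. x \<in> carrier R \<and> h x = a) = a"
  by (rule someI_ex) (use h_surj in blast)

lemma lift_closed: "a \<in> carrier S \<Longrightarrow> lift a \<in> carrier R"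
  unfolding lift_def using some_preimage e_closed by simp

lemma h_lift: "a \<in> carrier S \<Longrightarrow> h (lift a) = a"
  unfolding lift_def using some_preimage e_closed h_e by simp

lemma e_lift: "a \<in> carrier S \<Longrightarrow> e \<otimes> lift a = lift a"
  unfolding lift_def using some_preimage e_closed e_idem by (simp add: R.m_assoc[symmetric])

lemma lift_zero: "lift \<zero>\<^bsub>S\<^esub> = \<zero>"
  using e_kernel[OF lift_closed] h_lift e_lift by simp

lemma f_closed: "f \<in> carrier R"
  unfolding f_def using e_closed by simp

lemma h_f: "h f = \<zero>\<^bsub>S\<^esub>"
  unfolding f_def using e_closed h_e by (simp add: R.minus_eq S.minus_eq S.r_neg)

lemma f_e: "f \<otimes> e = \<zero>"
  unfolding f_def using e_closed e_idem by (simp add: R.minus_eq R.l_distr R.l_minus R.r_neg)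

lemma f_idem: "f \<otimes> f = f"
  unfolding f_def using e_closed e_idem
  by (simp add: R.minus_eq R.l_distr R.r_distr R.l_minus R.r_minus R.r_neg R.a_assoc)

lemma f_lift:
  assumes "a \<in> carrier S"
  shows "f \<otimes> lift a = \<zero>"
proof -
  have "f \<otimes> lift a = (f \<otimes> e) \<otimes> lift a"
    using e_lift[OF assms] f_closed e_closed lift_closed[OF assms] by (simp add: R.m_assoc)
  then show ?thesis using f_e lift_closed[OF assms] by simp
qed

lemma e_f_sum: "x \<in> carrier R \<Longrightarrow> e \<otimes> x \<oplus> f \<otimes> x = x"
  unfolding f_def using e_closed by algebra

lemma eq_by_components:
  assumes x: "x \<in> carrier R" and y: "y \<in> carrier R" and "h x = h y" and "f \<otimes> x = f \<otimes> y"
  shows "x = y"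
proof -
  have d: "x \<ominus> y \<in> carrier R" using x y by simp
  have "h (x \<ominus> y) = \<zero>\<^bsub>S\<^esub>" using assms by (simp add: R.minus_eq S.minus_eq S.r_neg)
  then have "e \<otimes> (x \<ominus> y) = \<zero>" using e_kernel d by simp
  moreover have "f \<otimes> (x \<ominus> y) = \<zero>" using assms f_closed by (simp add: R.minus_eq R.r_distr R.r_minus R.r_neg)
  ultimately have "x \<ominus> y = \<zero>" using e_f_sum[OF d] by simp
  then show ?thesis using x y by simp
qed

lemma vec_eq_by_components:
  assumes "\<And>i. x i \<in> carrier R" "\<And>i. y i \<in> carrier R" "vmap x = vmap y" "\<And>i. f \<otimes> x i = f \<otimes> y i"
  shows "x = y"
proof
  fix i
  have "h (x i) = h (y i)" using assms(3) unfolding vmap_def by meson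
  then show "x i = y i" using eq_by_components assms by blast
qed

lemma fvec_vmap: "v \<in> fvec R n \<Longrightarrow> vmap v \<in> fvec S n"
  unfolding fvec_def vmap_def by auto

lemma fvec_vlift: "a \<in> fvec S n \<Longrightarrow> vlift a \<in> fvec R n"
  unfolding fvec_def vlift_def using lift_closed lift_zero by auto

lemma vmap_vlift: "a \<in> fvec S n \<Longrightarrow> vmap (vlift a) = a"
  unfolding vmap_def vlift_def using h_lift S.fvec_closed by auto

lemma vmap_vsub: "a \<in> fvec R p \<Longrightarrow> b \<in> fvec R p \<Longrightarrow> vmap (vsub R a b) = vsub S (vmap a) (vmap b)"
  unfolding vmap_def vsub_def using R.fvec_closed by (auto simp: R.minus_eq S.minus_eq)

lemma vmap_zero: "vmap (\<lambda>_. \<zero>) = (\<lambda>_. \<zero>\<^bsub>S\<^esub>)"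
  unfolding vmap_def by simp

lemma h_finsum_mult:
  assumes "\<And>j. j < n \<Longrightarrow> a j \<in> carrier R" "\<And>j. j < n \<Longrightarrow> b j \<in> carrier R"
  shows "h (\<Oplus>j\<in>{..<n}. a j \<otimes> b j) = (\<Oplus>\<^bsub>S\<^esub>j\<in>{..<n}. h (a j) \<otimes>\<^bsub>S\<^esub> h (b j))"
proof -
  have "h (\<Oplus>j\<in>{..<n}. a j \<otimes> b j) = (\<Oplus>\<^bsub>S\<^esub>j\<in>{..<n}. h (a j \<otimes> b j))"
    using hom_finsum[of "\<lambda>j. a j \<otimes> b j" "{..<n}"] assms by (simp add: comp_def)
  also have "\<dots> = (\<Oplus>\<^bsub>S\<^esub>j\<in>{..<n}. h (a j) \<otimes>\<^bsub>S\<^esub> h (b j))"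
    by (rule S.finsum_cong') (use assms in auto)
  finally show ?thesis .
qed

lemma vmap_mv:
  assumes "is_mat R m n D" "\<And>j. j < n \<Longrightarrow> v j \<in> carrier R"
  shows "vmap (mv R m n D v) = mv S m n (\<lambda>i j. h (D i j)) (vmap v)"
proof
  fix i
  show "vmap (mv R m n D v) i = mv S m n (\<lambda>i j. h (D i j)) (vmap v) i"
    using h_finsum_mult[of n "D i" v] assms unfolding mv_def vmap_def is_mat_def by auto
qed

lemma vmap_cobdry:
  assumes "\<And>j. j < n \<Longrightarrow> u j \<in> fvec R p" "\<And>j. j < n \<Longrightarrow> D j l \<in> carrier R"
  shows "vmap (cobdry R n D u l) = cobdry S n (\<lambda>i j. h (D i j)) (\<lambda>j. vmap (u j)) l"
proof
  fix i
  have "\<And>j. j < n \<Longrightarrow> u j i \<in> carrier R" using assms(1) R.fvec_closed by blast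
  then show "vmap (cobdry R n D u l) i = cobdry S n (\<lambda>i j. h (D i j)) (\<lambda>j. vmap (u j)) l i"
    using h_finsum_mult[of n "\<lambda>j. D j l" "\<lambda>j. u j i"] assms(2)
    unfolding vmap_def cobdry_def by simp
qed

lemma f_mv:
  assumes D: "is_mat R m n D" and v: "\<And>j. j < n \<Longrightarrow> v j \<in> carrier R"
  shows "f \<otimes> mv R m n D v i = (if i < m then \<Oplus>j\<in>{..<n}. (f \<otimes> D i j) \<otimes> v j else \<zero>)"
proof (cases "i < m")
  case True
  have Dv: "(\<lambda>j. D i j \<otimes> v j) \<in> {..<n} \<rightarrow> carrier R" using D v True by (auto simp: is_mat_def)
  have "f \<otimes> mv R m n D v i = (\<Oplus>j\<in>{..<n}. f \<otimes> (D i j \<otimes> v j))"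
    unfolding mv_def using True R.finsum_rdistr[OF finite_lessThan f_closed Dv] by simp
  also have "\<dots> = (\<Oplus>j\<in>{..<n}. (f \<otimes> D i j) \<otimes> v j)"
    by (rule R.finsum_cong') (use D v True f_closed in \<open>auto simp: is_mat_def R.m_assoc\<close>)
  finally show ?thesis using True by simp
qed (use f_closed in \<open>simp add: mv_def\<close>)

lemma is_mat_h: "is_mat R m n D \<Longrightarrow> is_mat S m n (\<lambda>i j. h (D i j))"
  unfolding is_mat_def by simp

lemma cochain_vmap: "u \<in> cochain R p n \<Longrightarrow> (\<lambda>j. vmap (u j)) \<in> cochain S p n"
  unfolding cochain_def using fvec_vmap by blast

lemma cochain_vlift: "a \<in> cochain S p n \<Longrightarrow> (\<lambda>j. vlift (a j)) \<in> cochain R p n"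
  unfolding cochain_def using fvec_vlift by blast

context
  fixes r D p q q' \<psi> \<psi>'
  assumes D: "\<And>k. is_mat R (r k) (r (Suc k)) (D k)"
    and img: "\<And>v. v \<in> fvec R p \<Longrightarrow> v \<in> mimg R p q' \<psi>' \<longleftrightarrow> vmap v \<in> mimg S p q \<psi>"
begin

lemma ext_cocycle_vmap:
  assumes u: "u \<in> cochain R p (r k)"
  shows "ext_cocycle R r D p q' \<psi>' k u \<longleftrightarrow> ext_cocycle S r (\<lambda>k i j. h (D k i j)) p q \<psi> k (\<lambda>j. vmap (u j))"
proof -
  have uf: "\<And>j. j < r k \<Longrightarrow> u j \<in> fvec R p" using u unfolding cochain_def by auto
  have "cobdry R (r k) (D k) u l \<in> mimg R p q' \<psi>' \<longleftrightarrow>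
      cobdry S (r k) (\<lambda>i j. h (D k i j)) (\<lambda>j. vmap (u j)) l \<in> mimg S p q \<psi>" if "l < r (Suc k)" for l
  proof -
    have Dl: "\<And>j. j < r k \<Longrightarrow> D k j l \<in> carrier R" using D[of k] that unfolding is_mat_def by auto
    show ?thesis
      using img[OF R.cobdry_fvec[of "r k" u p "D k" l, OF uf Dl]] vmap_cobdry[of "r k" u p "D k" l, OF uf Dl]
      by simp
  qed
  then show ?thesis unfolding ext_cocycle_def by auto
qed

lemma ext_coboundary_vmap:
  assumes u: "u \<in> cochain R p (r k)"
  shows "ext_coboundary R r D p q' \<psi>' k u \<longleftrightarrow> ext_coboundary S r (\<lambda>k i j. h (D k i j)) p q \<psi> k (\<lambda>j. vmap (u j))"
proof (cases k)
  case 0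
  then show ?thesis using img u unfolding ext_coboundary_def cochain_def by auto
next
  case (Suc k')
  have uf: "\<And>j. j < r k \<Longrightarrow> u j \<in> fvec R p" using u unfolding cochain_def by auto
  have key: "vsub R (u j) (cobdry R (r k') (D k') W j) \<in> mimg R p q' \<psi>' \<longleftrightarrow>
      vsub S (vmap (u j)) (cobdry S (r k') (\<lambda>i j. h (D k' i j)) (\<lambda>i. vmap (W i)) j) \<in> mimg S p q \<psi>"
    if W: "W \<in> cochain R p (r k')" and j: "j < r k" for W j
  proof -
    have Wf: "\<And>i. i < r k' \<Longrightarrow> W i \<in> fvec R p" using W unfolding cochain_def by auto
    have Dj: "\<And>i. i < r k' \<Longrightarrow> D k' i j \<in> carrier R" using D[of k'] j Suc unfolding is_mat_def by auto
    have cf: "cobdry R (r k') (D k') W j \<in> fvec R p" using R.cobdry_fvec[of "r k'" W p "D k'" j, OF Wf Dj] .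
    show ?thesis
      using img[OF R.vsub_fvec[OF uf[OF j] cf]] vmap_vsub[OF uf[OF j] cf]
        vmap_cobdry[of "r k'" W p "D k'" j, OF Wf Dj]
      by simp
  qed
  show ?thesis
  proof
    assume "ext_coboundary R r D p q' \<psi>' k u"
    then obtain W where W: "W \<in> cochain R p (r k')"
      and "\<forall>j < r k. vsub R (u j) (cobdry R (r k') (D k') W j) \<in> mimg R p q' \<psi>'"
      unfolding ext_coboundary_def Suc by auto
    then show "ext_coboundary S r (\<lambda>k i j. h (D k i j)) p q \<psi> k (\<lambda>j. vmap (u j))"
      unfolding ext_coboundary_def using Suc key[OF W] cochain_vmap[OF W] by auto
  next
    assume "ext_coboundary S r (\<lambda>k i j. h (D k i j)) p q \<psi> k (\<lambda>j. vmap (u j))"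
    then obtain w where w: "w \<in> cochain S p (r k')"
      and wc: "\<forall>j < r k. vsub S (vmap (u j)) (cobdry S (r k') (\<lambda>i j. h (D k' i j)) w j) \<in> mimg S p q \<psi>"
      unfolding ext_coboundary_def Suc by auto
    define W where "W = (\<lambda>i. vlift (w i))"
    have W: "W \<in> cochain R p (r k')" unfolding W_def using cochain_vlift[OF w] .
    have "cobdry S (r k') (\<lambda>i j. h (D k' i j)) (\<lambda>i. vmap (W i)) j = cobdry S (r k') (\<lambda>i j. h (D k' i j)) w j"
      if "j < r k" for j
      by (rule S.cobdry_cong[where p = p])
        (use w that Suc D[of k'] in \<open>auto simp: W_def cochain_def vmap_vlift is_mat_def\<close>)
    then show "ext_coboundary R r D p q' \<psi>' k u"
      unfolding ext_coboundary_def using Suc key[OF W] W wc by auto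
  qed
qed

lemma ext_nonzero_vmap:
  "ext_nonzero R r D p q' \<psi>' k \<longleftrightarrow> ext_nonzero S r (\<lambda>k i j. h (D k i j)) p q \<psi> k"
proof
  assume "ext_nonzero R r D p q' \<psi>' k"
  then obtain u where "u \<in> cochain R p (r k)" "ext_cocycle R r D p q' \<psi>' k u" "\<not> ext_coboundary R r D p q' \<psi>' k u"
    unfolding ext_nonzero_iff by blast
  then show "ext_nonzero S r (\<lambda>k i j. h (D k i j)) p q \<psi> k"
    unfolding ext_nonzero_iff using cochain_vmap ext_cocycle_vmap ext_coboundary_vmap by blast
next
  assume "ext_nonzero S r (\<lambda>k i j. h (D k i j)) p q \<psi> k"
  then obtain a where a: "a \<in> cochain S p (r k)"
    and "ext_cocycle S r (\<lambda>k i j. h (D k i j)) p q \<psi> k a" "\<not> ext_coboundary S r (\<lambda>k i j. h (D k i j)) p q \<psi> k a"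
    unfolding ext_nonzero_iff by blast
  moreover define u where "u = (\<lambda>j. vlift (a j))"
  moreover have u: "u \<in> cochain R p (r k)" unfolding u_def using cochain_vlift[OF a] .
  moreover have "\<And>j. j < r k \<Longrightarrow> vmap (u j) = a j" using a unfolding u_def cochain_def by (auto simp: vmap_vlift)
  ultimately show "ext_nonzero R r D p q' \<psi>' k"
    unfolding ext_nonzero_iff
    using ext_cocycle_vmap[OF u] ext_coboundary_vmap[OF u]
      S.ext_cocycle_cong[of r k "\<lambda>k i j. h (D k i j)" "\<lambda>j. vmap (u j)" a p q \<psi>, OF is_mat_h[OF D]]
      ext_coboundary_cong[of r k "\<lambda>j. vmap (u j)" a S "\<lambda>k i j. h (D k i j)" p q \<psi>]
    by blast
qed

end

end

section \<open>Padding a free resolution by trivial complexes\<close>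

text \<open>In degree \<open>k\<close> the padded module is
  \<open>F\<^sub>k \<oplus> A\<^bsup>mid_rank r k\<^esup> \<oplus> A\<^bsup>tail_rank r k\<^esup>\<close>, and the middle block of degree \<open>k + 1\<close> is mapped
  identically onto the tail block of degree \<open>k\<close>.  The tail block of degree \<open>k + 1\<close> has exactly the
  size of the first two blocks of degree \<open>k\<close>; this is what the lifted resolution needs.\<close>

fun tail_rank :: "(nat \<Rightarrow> nat) \<Rightarrow> nat \<Rightarrow> nat" where
  "tail_rank r 0 = 0"
| "tail_rank r (Suc 0) = r 0"
| "tail_rank r (Suc (Suc k)) = r (Suc k) + tail_rank r k"

definition mid_rank :: "(nat \<Rightarrow> nat) \<Rightarrow> nat \<Rightarrow> nat" where
  "mid_rank r k = (case k of 0 \<Rightarrow> 0 | Suc j \<Rightarrow> tail_rank r j)"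

definition padded_rank :: "(nat \<Rightarrow> nat) \<Rightarrow> nat \<Rightarrow> nat" where
  "padded_rank r k = r k + mid_rank r k + tail_rank r k"

lemma mid_rank_0 [simp]: "mid_rank r 0 = 0"
  and mid_rank_Suc [simp]: "mid_rank r (Suc k) = tail_rank r k"
  unfolding mid_rank_def by auto

lemma tail_rank_Suc: "tail_rank r (Suc k) = r k + mid_rank r k"
  by (cases k) auto

lemma padded_rank_0 [simp]: "padded_rank r 0 = r 0"
  unfolding padded_rank_def by simp

lemma rank_le_padded_rank: "r k \<le> padded_rank r k"
  unfolding padded_rank_def by simp

definition padded_diff :: "('a, 'm) ring_scheme \<Rightarrow> (nat \<Rightarrow> nat) \<Rightarrow> (nat \<Rightarrow> nat \<Rightarrow> nat \<Rightarrow> 'a)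
    \<Rightarrow> nat \<Rightarrow> nat \<Rightarrow> nat \<Rightarrow> 'a" where
  "padded_diff R r d k i j =
     (if i < r k \<and> j < r (Suc k) then d k i j else \<zero>\<^bsub>R\<^esub>) \<oplus>\<^bsub>R\<^esub>
     (if r k + mid_rank r k \<le> i \<and> j = r (Suc k) + (i - r k - mid_rank r k) then \<one>\<^bsub>R\<^esub> else \<zero>\<^bsub>R\<^esub>)"

context cring
begin

lemma padded_diff_closed: "is_mat R (r k) (r (Suc k)) (d k) \<Longrightarrow> padded_diff R r d k i j \<in> carrier R"
  unfolding padded_diff_def is_mat_def by auto

lemma is_mat_padded_diff:
  "is_mat R (r k) (r (Suc k)) (d k) \<Longrightarrow> is_mat R (padded_rank r k) (padded_rank r (Suc k)) (padded_diff R r d k)"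
  using padded_diff_closed unfolding is_mat_def by blast

lemma padded_diff_mult:
  assumes "is_mat R (r k) (r (Suc k)) (d k)" "x \<in> carrier R"
  shows "padded_diff R r d k i j \<otimes> x =
    (if i < r k \<and> j < r (Suc k) then d k i j \<otimes> x else \<zero>) \<oplus>
    (if r k + mid_rank r k \<le> i \<and> j = r (Suc k) + (i - r k - mid_rank r k) then x else \<zero>)"
  unfolding padded_diff_def using assms by (auto simp: l_distr is_mat_def)

lemma finsum_prefix_unit:
  fixes m n t :: nat
  assumes "m \<le> n" "\<And>j. j < m \<Longrightarrow> g j \<in> carrier R" "P \<Longrightarrow> t < n" "P \<Longrightarrow> b \<in> carrier R"
  shows "(\<Oplus>j\<in>{..<n}. (if j < m then g j else \<zero>) \<oplus> (if P \<and> j = t then b else \<zero>)) =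
    (\<Oplus>j\<in>{..<m}. g j) \<oplus> (if P then b else \<zero>)"
proof -
  have "(\<Oplus>j\<in>{..<n}. (if j < m then g j else \<zero>) \<oplus> (if P \<and> j = t then b else \<zero>)) =
      (\<Oplus>j\<in>{..<n}. if j < m then g j else \<zero>) \<oplus> (\<Oplus>j\<in>{..<n}. if j = t then (if P then b else \<zero>) else \<zero>)"
    by (subst finsum_addf[symmetric]) (use assms in \<open>auto intro!: finsum_cong'\<close>)
  also have "\<dots> = (\<Oplus>j\<in>{..<m}. g j) \<oplus> (if P then b else \<zero>)"
    using finsum_prefix[OF assms(1,2)] finsum_unit[of t n "if P then b else \<zero>"] assms(3,4) by auto
  finally show ?thesis .
qed

lemma mv_padded_diff:
  assumes d: "is_mat R (r k) (r (Suc k)) (d k)"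
    and a: "\<And>j. j < padded_rank r (Suc k) \<Longrightarrow> a j \<in> carrier R"
  shows "mv R (padded_rank r k) (padded_rank r (Suc k)) (padded_diff R r d k) a i =
    (if i < padded_rank r k then
       (if i < r k then mv R (r k) (r (Suc k)) (d k) a i else \<zero>) \<oplus>
       (if r k + mid_rank r k \<le> i then a (r (Suc k) + (i - r k - mid_rank r k)) else \<zero>)
     else \<zero>)"
proof (cases "i < padded_rank r k")
  case i: True
  define j1 where "j1 = r (Suc k) + (i - r k - mid_rank r k)"
  have dc: "\<And>j. j < r (Suc k) \<Longrightarrow> i < r k \<Longrightarrow> d k i j \<in> carrier R" using d unfolding is_mat_def by auto
  have "mv R (padded_rank r k) (padded_rank r (Suc k)) (padded_diff R r d k) a i =
      (\<Oplus>j\<in>{..<padded_rank r (Suc k)}. (if j < r (Suc k) then (if i < r k then d k i j \<otimes> a j else \<zero>) else \<zero>)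
         \<oplus> (if r k + mid_rank r k \<le> i \<and> j = j1 then a j1 else \<zero>))"
    unfolding mv_def if_P[OF i]
    by (intro finsum_cong') (auto simp: padded_diff_mult[of r k d, OF d] a dc j1_def)
  also have "\<dots> = (\<Oplus>j\<in>{..<r (Suc k)}. if i < r k then d k i j \<otimes> a j else \<zero>) \<oplus>
      (if r k + mid_rank r k \<le> i then a j1 else \<zero>)"
    by (rule finsum_prefix_unit)
      (use i a dc rank_le_padded_rank[of r "Suc k"] in \<open>auto simp: j1_def padded_rank_def tail_rank_Suc\<close>)
  also have "(\<Oplus>j\<in>{..<r (Suc k)}. if i < r k then d k i j \<otimes> a j else \<zero>) =
      (if i < r k then mv R (r k) (r (Suc k)) (d k) a i else \<zero>)"
    by (auto simp: mv_def intro: finsum_zero)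
  finally show ?thesis using i unfolding j1_def by simp
qed (simp add: mv_def)

lemma cobdry_padded_diff:
  assumes d: "is_mat R (r k) (r (Suc k)) (d k)" and u: "\<And>j. j < padded_rank r k \<Longrightarrow> u j \<in> fvec R p"
  shows "cobdry R (padded_rank r k) (padded_diff R r d k) u l =
    (if l < r (Suc k) then cobdry R (r k) (d k) u l
     else if l < r (Suc k) + tail_rank r k then u (r k + mid_rank r k + (l - r (Suc k)))
     else (\<lambda>_. \<zero>))"
proof
  fix i
  define j0 where "j0 = r k + mid_rank r k + (l - r (Suc k))"
  define tail where "tail = (r (Suc k) \<le> l \<and> l < r (Suc k) + tail_rank r k)"
  have uc: "\<And>j. j < padded_rank r k \<Longrightarrow> u j i \<in> carrier R" using u fvec_closed by blast
  have dc: "\<And>j. j < r k \<Longrightarrow> l < r (Suc k) \<Longrightarrow> d k j l \<in> carrier R" using d unfolding is_mat_def by auto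
  have j0: "tail \<Longrightarrow> j0 < padded_rank r k" unfolding j0_def tail_def padded_rank_def by auto
  have "cobdry R (padded_rank r k) (padded_diff R r d k) u l i =
      (\<Oplus>j\<in>{..<padded_rank r k}. (if j < r k then (if l < r (Suc k) then d k j l \<otimes> u j i else \<zero>) else \<zero>)
         \<oplus> (if tail \<and> j = j0 then u j0 i else \<zero>))"
    unfolding cobdry_def
    by (intro finsum_cong') (auto simp: padded_diff_mult[of r k d, OF d] uc dc j0_def tail_def padded_rank_def)
  also have "\<dots> = (\<Oplus>j\<in>{..<r k}. if l < r (Suc k) then d k j l \<otimes> u j i else \<zero>) \<oplus> (if tail then u j0 i else \<zero>)"
    by (rule finsum_prefix_unit) (use uc dc j0 rank_le_padded_rank[of r k] in \<open>auto\<close>)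
  also have "(\<Oplus>j\<in>{..<r k}. if l < r (Suc k) then d k j l \<otimes> u j i else \<zero>) =
      (if l < r (Suc k) then cobdry R (r k) (d k) u l i else \<zero>)"
    by (auto simp: cobdry_def intro: finsum_zero)
  finally show "cobdry R (padded_rank r k) (padded_diff R r d k) u l i =
    (if l < r (Suc k) then cobdry R (r k) (d k) u l
     else if l < r (Suc k) + tail_rank r k then u (r k + mid_rank r k + (l - r (Suc k)))
     else (\<lambda>_. \<zero>)) i"
    using uc j0 dc rank_le_padded_rank[of r k] unfolding tail_def j0_def
    by (auto simp: cobdry_def intro!: finsum_closed)
qed

lemma padded_blocks:
  obtains (top) "i < r k"
  | (mid) "r k \<le> i" "i < r k + mid_rank r k"
  | (tail) m where "i = r k + mid_rank r k + m" "m < tail_rank r k"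
  | (out) "padded_rank r k \<le> i"
proof -
  consider "i < r k" | "r k \<le> i \<and> i < r k + mid_rank r k"
    | "r k + mid_rank r k \<le> i \<and> i < padded_rank r k" | "padded_rank r k \<le> i"
    unfolding padded_rank_def by linarith
  then show ?thesis
  proof cases
    case 3
    then show ?thesis using that(3)[of "i - r k - mid_rank r k"] unfolding padded_rank_def by auto
  qed (use that in auto)
qed

context
  fixes r d
  assumes d: "\<And>k. is_mat R (r k) (r (Suc k)) (d k)"
begin

lemma mv_padded_diff_top:
  assumes "\<And>j. j < padded_rank r (Suc k) \<Longrightarrow> a j \<in> carrier R" "i < r k"
  shows "mv R (padded_rank r k) (padded_rank r (Suc k)) (padded_diff R r d k) a i = mv R (r k) (r (Suc k)) (d k) a i"
  using mv_padded_diff[of r k d, OF d assms(1)] assms rank_le_padded_rank[of r k]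
    mv_closed[OF d[of k], of a i] rank_le_padded_rank[of r "Suc k"]
  by auto

lemma mv_padded_diff_mid:
  assumes "\<And>j. j < padded_rank r (Suc k) \<Longrightarrow> a j \<in> carrier R" "r k \<le> i" "i < r k + mid_rank r k"
  shows "mv R (padded_rank r k) (padded_rank r (Suc k)) (padded_diff R r d k) a i = \<zero>"
  using mv_padded_diff[of r k d, OF d assms(1)] assms by (simp add: padded_rank_def)

lemma mv_padded_diff_tail:
  assumes "\<And>j. j < padded_rank r (Suc k) \<Longrightarrow> a j \<in> carrier R" "m < tail_rank r k"
  shows "mv R (padded_rank r k) (padded_rank r (Suc k)) (padded_diff R r d k) a (r k + mid_rank r k + m) =
    a (r (Suc k) + m)"
proof -
  have "r (Suc k) + m < padded_rank r (Suc k)" using assms(2) unfolding padded_rank_def by simp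
  then show ?thesis using mv_padded_diff[of r k d, OF d assms(1)] assms by (simp add: padded_rank_def)
qed

lemma mv_padded_diff_out:
  "padded_rank r k \<le> i \<Longrightarrow> mv R (padded_rank r k) (padded_rank r (Suc k)) (padded_diff R r d k) a i = \<zero>"
  unfolding mv_def by simp

lemma padded_kernel_in_image:
  assumes ex: "{v \<in> fvec R (r (Suc k)). mv R (r k) (r (Suc k)) (d k) v = (\<lambda>_. \<zero>)}
      = mimg R (r (Suc k)) (r (Suc (Suc k))) (d (Suc k))"
    and a: "a \<in> fvec R (padded_rank r (Suc k))"
    and a0: "mv R (padded_rank r k) (padded_rank r (Suc k)) (padded_diff R r d k) a = (\<lambda>_. \<zero>)"
  shows "a \<in> mimg R (padded_rank r (Suc k)) (padded_rank r (Suc (Suc k))) (padded_diff R r d (Suc k))"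
proof -
  have ac: "\<And>j. a j \<in> carrier R" using fvec_closed[OF a] .
  have "mv R (r k) (r (Suc k)) (d k) (vtrunc R (r (Suc k)) a) = (\<lambda>_. \<zero>)"
  proof
    fix i
    show "mv R (r k) (r (Suc k)) (d k) (vtrunc R (r (Suc k)) a) i = \<zero>"
    proof (cases "i < r k")
      case True
      then show ?thesis
        using mv_vtrunc[OF d[of k]] mv_padded_diff_top[OF _ True, of a] a0 ac by (metis (no_types, lifting))
    qed (simp add: mv_def)
  qed
  then have "vtrunc R (r (Suc k)) a \<in> mimg R (r (Suc k)) (r (Suc (Suc k))) (d (Suc k))"
    using ex vtrunc_fvec ac by blast
  then obtain b0 where b0: "b0 \<in> fvec R (r (Suc (Suc k)))"
    "vtrunc R (r (Suc k)) a = mv R (r (Suc k)) (r (Suc (Suc k))) (d (Suc k)) b0"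
    unfolding mimg_def by blast
  \<comment> \<open>The middle block of the preimage copies the tail block of \<open>a\<close>.\<close>
  define b where "b j = (if j < r (Suc (Suc k)) then b0 j
      else if j < r (Suc (Suc k)) + mid_rank r (Suc (Suc k))
      then a (r (Suc k) + mid_rank r (Suc k) + (j - r (Suc (Suc k)))) else \<zero>)" for j
  have bc: "\<And>j. b j \<in> carrier R" unfolding b_def using fvec_closed[OF b0(1)] ac by auto
  have b: "b \<in> fvec R (padded_rank r (Suc (Suc k)))" unfolding fvec_def using bc by (auto simp: b_def padded_rank_def)
  have "mv R (padded_rank r (Suc k)) (padded_rank r (Suc (Suc k))) (padded_diff R r d (Suc k)) b i = a i" for i
  proof (cases i rule: padded_blocks[of _ r "Suc k"])
    case top
    have "vtrunc R (r (Suc (Suc k))) b = b0" unfolding vtrunc_def b_def using b0(1) by (auto simp: fvec_def)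
    then have "mv R (r (Suc k)) (r (Suc (Suc k))) (d (Suc k)) b i = vtrunc R (r (Suc k)) a i"
      using b0(2) mv_vtrunc[OF d[of "Suc k"], of b] bc by metis
    then show ?thesis using mv_padded_diff_top[OF _ top, of b] bc top by (simp add: vtrunc_def)
  next
    case mid
    define m where "m = i - r (Suc k)"
    have "m < tail_rank r k" "i = r (Suc k) + m" using mid unfolding m_def by auto
    then have "a i = \<zero>" using mv_padded_diff_tail[of k a m] a0 ac by (metis (no_types, lifting))
    then show ?thesis using mv_padded_diff_mid[OF _ mid, of b] bc by simp
  next
    case (tail m)
    then show ?thesis using mv_padded_diff_tail[of "Suc k" b m] bc by (simp add: b_def)
  next
    case out
    then show ?thesis using mv_padded_diff_out[OF out] a unfolding fvec_def by simp
  qed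
  then show ?thesis unfolding mimg_def using b by (auto intro!: image_eqI[where x = b])
qed

lemma padded_image_in_kernel:
  assumes ex: "mimg R (r (Suc k)) (r (Suc (Suc k))) (d (Suc k))
      \<subseteq> {v \<in> fvec R (r (Suc k)). mv R (r k) (r (Suc k)) (d k) v = (\<lambda>_. \<zero>)}"
    and a: "a \<in> mimg R (padded_rank r (Suc k)) (padded_rank r (Suc (Suc k))) (padded_diff R r d (Suc k))"
  shows "a \<in> fvec R (padded_rank r (Suc k))"
    and "mv R (padded_rank r k) (padded_rank r (Suc k)) (padded_diff R r d k) a = (\<lambda>_. \<zero>)"
proof -
  obtain b where b: "b \<in> fvec R (padded_rank r (Suc (Suc k)))"
    and ab: "a = mv R (padded_rank r (Suc k)) (padded_rank r (Suc (Suc k))) (padded_diff R r d (Suc k)) b"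
    using a unfolding mimg_def by blast
  have bc: "\<And>j. b j \<in> carrier R" using fvec_closed[OF b] .
  show af: "a \<in> fvec R (padded_rank r (Suc k))"
    unfolding ab using mv_fvec[OF is_mat_padded_diff[of r "Suc k" d, OF d]] bc by blast
  have ac: "\<And>j. a j \<in> carrier R" using fvec_closed[OF af] .
  have "vtrunc R (r (Suc k)) a = mv R (r (Suc k)) (r (Suc (Suc k))) (d (Suc k)) b"
    unfolding vtrunc_def ab using mv_padded_diff_top[of "Suc k" b] bc by (auto simp: mv_def)
  then have "vtrunc R (r (Suc k)) a \<in> mimg R (r (Suc k)) (r (Suc (Suc k))) (d (Suc k))"
    using mv_in_mimg[OF d[of "Suc k"]] bc by simp
  then have top0: "mv R (r k) (r (Suc k)) (d k) a = (\<lambda>_. \<zero>)"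
    using ex mv_vtrunc[OF d[of k], of a] ac by auto
  show "mv R (padded_rank r k) (padded_rank r (Suc k)) (padded_diff R r d k) a = (\<lambda>_. \<zero>)"
  proof
    fix i
    show "mv R (padded_rank r k) (padded_rank r (Suc k)) (padded_diff R r d k) a i = \<zero>"
    proof (cases i rule: padded_blocks[of _ r k])
      case top
      then show ?thesis using mv_padded_diff_top[OF _ top, of a] ac top0 by simp
    next
      case mid
      then show ?thesis using mv_padded_diff_mid[OF _ mid, of a] ac by simp
    next
      case (tail m)
      have "r (Suc k) \<le> r (Suc k) + m" "r (Suc k) + m < r (Suc k) + mid_rank r (Suc k)" using tail by auto
      then have "a (r (Suc k) + m) = \<zero>"
        unfolding ab using mv_padded_diff_mid[of "Suc k" b] bc by blast
      then show ?thesis using mv_padded_diff_tail[of k a m] ac tail by simp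
    qed (rule mv_padded_diff_out)
  qed
qed

lemma free_resolution_padded:
  assumes "free_resolution R r d"
  shows "free_resolution R (padded_rank r) (padded_diff R r d)"
  unfolding free_resolution_def
proof (intro conjI allI)
  fix k
  have ex: "{v \<in> fvec R (r (Suc k)). mv R (r k) (r (Suc k)) (d k) v = (\<lambda>_. \<zero>)}
      = mimg R (r (Suc k)) (r (Suc (Suc k))) (d (Suc k))"
    using assms unfolding free_resolution_def by blast
  show "is_mat R (padded_rank r k) (padded_rank r (Suc k)) (padded_diff R r d k)"
    using is_mat_padded_diff[of r k d, OF d] .
  show "{v \<in> fvec R (padded_rank r (Suc k)). mv R (padded_rank r k) (padded_rank r (Suc k)) (padded_diff R r d k) v = (\<lambda>_. \<zero>)}
      = mimg R (padded_rank r (Suc k)) (padded_rank r (Suc (Suc k))) (padded_diff R r d (Suc k))"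
    using padded_kernel_in_image[OF ex] padded_image_in_kernel[OF equalityD2[OF ex]] by blast
qed

end

context
  fixes r d p q \<psi>
  assumes d: "\<And>k. is_mat R (r k) (r (Suc k)) (d k)" and psi: "is_mat R p q \<psi>"
begin

lemma ext_cocycle_of_padded:
  assumes u: "u \<in> cochain R p (padded_rank r k)"
    and coc: "ext_cocycle R (padded_rank r) (padded_diff R r d) p q \<psi> k u"
  shows "ext_cocycle R r d p q \<psi> k u"
  unfolding ext_cocycle_def
proof (intro allI impI)
  fix l assume l: "l < r (Suc k)"
  then have "cobdry R (padded_rank r k) (padded_diff R r d k) u l \<in> mimg R p q \<psi>"
    using coc rank_le_padded_rank[of r "Suc k"] unfolding ext_cocycle_def by auto
  then show "cobdry R (r k) (d k) u l \<in> mimg R p q \<psi>"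
    using cobdry_padded_diff[of r k d u p l, OF d] u l by (simp add: cochain_def)
qed

lemma ext_coboundary_padded:
  assumes u: "u \<in> cochain R p (padded_rank r k)"
    and coc: "ext_cocycle R (padded_rank r) (padded_diff R r d) p q \<psi> k u"
    and cob: "ext_coboundary R r d p q \<psi> k u"
  shows "ext_coboundary R (padded_rank r) (padded_diff R r d) p q \<psi> k u"
proof (cases k)
  case 0
  then show ?thesis using cob unfolding ext_coboundary_def by simp
next
  case (Suc k')
  have uf: "\<And>j. j < padded_rank r k \<Longrightarrow> u j \<in> fvec R p" using u unfolding cochain_def by auto
  obtain w where w: "w \<in> cochain R p (r k')"
    and wc: "\<forall>j < r k. vsub R (u j) (cobdry R (r k') (d k') w j) \<in> mimg R p q \<psi>"
    using cob Suc unfolding ext_coboundary_def by auto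
  have wf: "\<And>j. j < r k' \<Longrightarrow> w j \<in> fvec R p" using w unfolding cochain_def by auto
  \<comment> \<open>Extend \<open>w\<close> by zero on the middle block and by the tail block of \<open>u\<close> on the tail block.\<close>
  define W where "W j = (if j < r k' then w j else if j < r k' + mid_rank r k' then (\<lambda>_. \<zero>)
      else u (r k + (j - r k' - mid_rank r k')))" for j
  have Wf: "\<And>j. j < padded_rank r k' \<Longrightarrow> W j \<in> fvec R p"
    using wf uf zero_fvec unfolding W_def by (auto simp: padded_rank_def Suc tail_rank_Suc)
  have "vsub R (u j) (cobdry R (padded_rank r k') (padded_diff R r d k') W j) \<in> mimg R p q \<psi>"
    if j: "j < padded_rank r k" for j
  proof (cases j rule: padded_blocks[of _ r k])
    case top
    have "cobdry R (r k') (d k') W j = cobdry R (r k') (d k') w j"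
      by (rule cobdry_cong[OF _ wf]) (use d[of k'] top Suc in \<open>auto simp: W_def is_mat_def\<close>)
    then show ?thesis using cobdry_padded_diff[of r k' d W p j, OF d Wf] top Suc wc by simp
  next
    case mid
    have "W (r k' + mid_rank r k' + (j - r k)) = u j" unfolding W_def using mid by auto
    then show ?thesis
      using cobdry_padded_diff[of r k' d W p j, OF d Wf] mid Suc vsub_self[OF uf[OF j]] zero_mimg[OF psi]
      by simp
  next
    case (tail m)
    have "r (Suc k) + m < padded_rank r (Suc k)" using tail unfolding padded_rank_def by simp
    then have "cobdry R (padded_rank r k) (padded_diff R r d k) u (r (Suc k) + m) \<in> mimg R p q \<psi>"
      using coc unfolding ext_cocycle_def by simp
    then have "u j \<in> mimg R p q \<psi>" using cobdry_padded_diff[of r k d u p "r (Suc k) + m", OF d uf] tail by simp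
    then show ?thesis
      using cobdry_padded_diff[of r k' d W p j, OF d Wf] tail Suc vsub_zero[OF uf[OF j]]
      by (simp add: tail_rank_Suc)
  qed (use j in simp)
  moreover have "W \<in> cochain R p (padded_rank r k')" unfolding cochain_def using Wf by auto
  ultimately show ?thesis unfolding ext_coboundary_def Suc by auto
qed

lemma ext_cocycle_padded_zero_ext:
  assumes u: "u \<in> cochain R p (r k)" and coc: "ext_cocycle R r d p q \<psi> k u"
  shows "ext_cocycle R (padded_rank r) (padded_diff R r d) p q \<psi> k (zero_ext R (r k) u)"
  unfolding ext_cocycle_def
proof (intro allI impI)
  fix l
  have U: "\<And>j. j < padded_rank r k \<Longrightarrow> zero_ext R (r k) u j \<in> fvec R p"
    using zero_ext_cochain[OF u rank_le_padded_rank[of r k]] unfolding cochain_def by auto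
  show "cobdry R (padded_rank r k) (padded_diff R r d k) (zero_ext R (r k) u) l \<in> mimg R p q \<psi>"
  proof (cases "l < r (Suc k)")
    case True
    have "cobdry R (r k) (d k) (zero_ext R (r k) u) l = cobdry R (r k) (d k) u l"
      by (rule cobdry_cong[where p = p]) (use u d[of k] True in \<open>auto simp: zero_ext_def cochain_def is_mat_def\<close>)
    then show ?thesis using cobdry_padded_diff[of r k d "zero_ext R (r k) u" p l, OF d U] True coc unfolding ext_cocycle_def by simp
  next
    case False
    have "zero_ext R (r k) u (r k + mid_rank r k + (l - r (Suc k))) = (\<lambda>_. \<zero>)"
      unfolding zero_ext_def by simp
    then show ?thesis
      using cobdry_padded_diff[of r k d "zero_ext R (r k) u" p l, OF d U] False zero_mimg[OF psi] by simp
  qed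
qed

lemma ext_coboundary_of_padded_zero_ext:
  assumes u: "u \<in> cochain R p (r k)"
    and cob: "ext_coboundary R (padded_rank r) (padded_diff R r d) p q \<psi> k (zero_ext R (r k) u)"
  shows "ext_coboundary R r d p q \<psi> k u"
proof (cases k)
  case 0
  then show ?thesis using cob unfolding ext_coboundary_def zero_ext_def by simp
next
  case (Suc k')
  obtain W where W: "W \<in> cochain R p (padded_rank r k')"
    and wc: "\<forall>j < padded_rank r k. vsub R (zero_ext R (r k) u j) (cobdry R (padded_rank r k') (padded_diff R r d k') W j) \<in> mimg R p q \<psi>"
    using cob Suc unfolding ext_coboundary_def by auto
  have Wf: "\<And>j. j < padded_rank r k' \<Longrightarrow> W j \<in> fvec R p" using W unfolding cochain_def by auto
  have "vsub R (u j) (cobdry R (r k') (d k') W j) \<in> mimg R p q \<psi>" if j: "j < r k" for j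
  proof -
    have "j < padded_rank r k" using j rank_le_padded_rank[of r k] by simp
    then show ?thesis
      using wc[rule_format, of j] j cobdry_padded_diff[of r k' d W p j, OF d Wf] Suc by (simp add: zero_ext_def)
  qed
  moreover have "W \<in> cochain R p (r k')" using Wf rank_le_padded_rank[of r k'] unfolding cochain_def by auto
  ultimately show ?thesis unfolding ext_coboundary_def Suc by auto
qed

lemma ext_nonzero_padded:
  "ext_nonzero R (padded_rank r) (padded_diff R r d) p q \<psi> k \<longleftrightarrow> ext_nonzero R r d p q \<psi> k"
proof
  assume "ext_nonzero R (padded_rank r) (padded_diff R r d) p q \<psi> k"
  then obtain u where u: "u \<in> cochain R p (padded_rank r k)"
    and coc: "ext_cocycle R (padded_rank r) (padded_diff R r d) p q \<psi> k u"
    and "\<not> ext_coboundary R (padded_rank r) (padded_diff R r d) p q \<psi> k u"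
    unfolding ext_nonzero_iff by blast
  moreover have "u \<in> cochain R p (r k)" using u rank_le_padded_rank[of r k] unfolding cochain_def by auto
  ultimately show "ext_nonzero R r d p q \<psi> k"
    unfolding ext_nonzero_iff using ext_cocycle_of_padded ext_coboundary_padded by blast
next
  assume "ext_nonzero R r d p q \<psi> k"
  then obtain u where "u \<in> cochain R p (r k)" "ext_cocycle R r d p q \<psi> k u" "\<not> ext_coboundary R r d p q \<psi> k u"
    unfolding ext_nonzero_iff by blast
  then show "ext_nonzero R (padded_rank r) (padded_diff R r d) p q \<psi> k"
    unfolding ext_nonzero_iff
    using zero_ext_cochain[OF _ rank_le_padded_rank[of r k]] ext_cocycle_padded_zero_ext ext_coboundary_of_padded_zero_ext
    by blast
qed

end

end

section \<open>Lifting resolutions and presentations along a direct factor\<close>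

context direct_factor
begin

text \<open>Over \<open>S\<close> the lifted differential is the padded one; over the factor \<open>f R\<close> it maps the tail block
  of degree \<open>k + 1\<close> identically onto the first two blocks of degree \<open>k\<close>, so that part of the complex
  is split exact and contributes neither homology nor Ext.\<close>
definition lifted_diff :: "(nat \<Rightarrow> nat) \<Rightarrow> (nat \<Rightarrow> nat \<Rightarrow> nat \<Rightarrow> 'c) \<Rightarrow> nat \<Rightarrow> nat \<Rightarrow> nat \<Rightarrow> 'a" where
  "lifted_diff r d k i j =
     (if i < r k \<and> j < r (Suc k) then lift (d k i j) else \<zero>) \<oplus>
     (if r k + mid_rank r k \<le> i \<and> j = r (Suc k) + (i - r k - mid_rank r k) then e else \<zero>) \<oplus>
     (if i < r k + mid_rank r k \<and> j = r (Suc k) + mid_rank r (Suc k) + i then f else \<zero>)"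

text \<open>The extra columns \<open>f \<epsilon>\<^sub>i\<close> kill the factor \<open>f R\<close>, so the presented \<open>R\<close>-module is the \<open>S\<close>-module
  presented by \<open>\<psi>\<close>.\<close>
definition lifted_pres :: "nat \<Rightarrow> (nat \<Rightarrow> nat \<Rightarrow> 'c) \<Rightarrow> nat \<Rightarrow> nat \<Rightarrow> 'a" where
  "lifted_pres q \<psi> i j = (if j < q then lift (\<psi> i j) else \<zero>) \<oplus> (if j = q + i then f else \<zero>)"

lemma lifted_diff_closed: "is_mat S (r k) (r (Suc k)) (d k) \<Longrightarrow> lifted_diff r d k i j \<in> carrier R"
  unfolding lifted_diff_def is_mat_def using lift_closed e_closed f_closed by auto

lemma is_mat_lifted_diff:
  "is_mat S (r k) (r (Suc k)) (d k) \<Longrightarrow> is_mat R (padded_rank r k) (padded_rank r (Suc k)) (lifted_diff r d k)"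
  using lifted_diff_closed[of r k d] unfolding is_mat_def by blast

lemma h_lifted_diff: "is_mat S (r k) (r (Suc k)) (d k) \<Longrightarrow> h (lifted_diff r d k i j) = padded_diff S r d k i j"
  unfolding lifted_diff_def padded_diff_def is_mat_def using lift_closed e_closed f_closed h_lift h_e h_f by auto

lemma f_lifted_diff:
  "is_mat S (r k) (r (Suc k)) (d k) \<Longrightarrow>
   f \<otimes> lifted_diff r d k i j = (if i < r k + mid_rank r k \<and> j = r (Suc k) + mid_rank r (Suc k) + i then f else \<zero>)"
  unfolding lifted_diff_def is_mat_def using lift_closed e_closed f_closed f_lift f_e f_idem by (auto simp: R.r_distr)

lemma lifted_pres_closed: "is_mat S p q \<psi> \<Longrightarrow> i < p \<Longrightarrow> lifted_pres q \<psi> i j \<in> carrier R"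
  unfolding lifted_pres_def is_mat_def using lift_closed f_closed by auto

lemma is_mat_lifted_pres: "is_mat S p q \<psi> \<Longrightarrow> is_mat R p (q + p) (lifted_pres q \<psi>)"
  using lifted_pres_closed unfolding is_mat_def by blast

lemma h_lifted_pres: "is_mat S p q \<psi> \<Longrightarrow> i < p \<Longrightarrow> h (lifted_pres q \<psi> i j) = (if j < q then \<psi> i j else \<zero>\<^bsub>S\<^esub>)"
  unfolding lifted_pres_def is_mat_def using lift_closed f_closed h_lift h_f by auto

lemma f_lifted_pres: "is_mat S p q \<psi> \<Longrightarrow> i < p \<Longrightarrow> f \<otimes> lifted_pres q \<psi> i j = (if j = q + i then f else \<zero>)"
  unfolding lifted_pres_def is_mat_def using lift_closed f_closed f_lift f_idem by (auto simp: R.r_distr)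

lemma vmap_mv_lifted_diff:
  assumes d: "\<And>k. is_mat S (r k) (r (Suc k)) (d k)" and a: "\<And>j. a j \<in> carrier R"
  shows "vmap (mv R (padded_rank r k) (padded_rank r (Suc k)) (lifted_diff r d k) a) =
    mv S (padded_rank r k) (padded_rank r (Suc k)) (padded_diff S r d k) (vmap a)"
  using vmap_mv[OF is_mat_lifted_diff[of r k d, OF d], of a] a h_lifted_diff[of r k d, OF d] by simp

lemma f_mv_lifted_diff:
  assumes d: "is_mat S (r k) (r (Suc k)) (d k)" and v: "\<And>j. j < padded_rank r (Suc k) \<Longrightarrow> v j \<in> carrier R"
  shows "f \<otimes> mv R (padded_rank r k) (padded_rank r (Suc k)) (lifted_diff r d k) v i =
     (if i < r k + mid_rank r k then f \<otimes> v (r (Suc k) + mid_rank r (Suc k) + i) else \<zero>)"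
proof -
  have fmv: "f \<otimes> mv R (padded_rank r k) (padded_rank r (Suc k)) (lifted_diff r d k) v i =
     (if i < padded_rank r k then \<Oplus>j\<in>{..<padded_rank r (Suc k)}. (f \<otimes> lifted_diff r d k i j) \<otimes> v j else \<zero>)"
    using f_mv[OF is_mat_lifted_diff[of r k d, OF d] v] .
  show ?thesis
  proof (cases "i < r k + mid_rank r k")
    case True
    define j3 where "j3 = r (Suc k) + mid_rank r (Suc k) + i"
    have j3: "j3 < padded_rank r (Suc k)" using True unfolding j3_def padded_rank_def by (simp add: tail_rank_Suc)
    have "(\<Oplus>j\<in>{..<padded_rank r (Suc k)}. (f \<otimes> lifted_diff r d k i j) \<otimes> v j) =
        (\<Oplus>j\<in>{..<padded_rank r (Suc k)}. if j = j3 then f \<otimes> v j3 else \<zero>)"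
      by (rule R.finsum_cong') (use f_lifted_diff[of r k d, OF d] True v f_closed j3 in \<open>auto simp: j3_def\<close>)
    also have "\<dots> = f \<otimes> v j3" using R.finsum_unit[of j3 "padded_rank r (Suc k)" "f \<otimes> v j3"] j3 v f_closed by simp
    finally show ?thesis using fmv True unfolding j3_def padded_rank_def by simp
  next
    case False
    have "(\<Oplus>j\<in>{..<padded_rank r (Suc k)}. (f \<otimes> lifted_diff r d k i j) \<otimes> v j) = \<zero>"
      by (rule R.finsum_zero) (use f_lifted_diff[of r k d, OF d] False v in auto)
    then show ?thesis using fmv False by simp
  qed
qed

lemma f_mv_lifted_pres:
  assumes psi: "is_mat S p q \<psi>" and v: "\<And>j. j < q + p \<Longrightarrow> v j \<in> carrier R"
  shows "f \<otimes> mv R p (q + p) (lifted_pres q \<psi>) v i = (if i < p then f \<otimes> v (q + i) else \<zero>)"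
proof (cases "i < p")
  case True
  have "f \<otimes> mv R p (q + p) (lifted_pres q \<psi>) v i = (\<Oplus>j\<in>{..<q + p}. (f \<otimes> lifted_pres q \<psi> i j) \<otimes> v j)"
    using f_mv[OF is_mat_lifted_pres[OF psi] v] True by simp
  also have "\<dots> = (\<Oplus>j\<in>{..<q + p}. if j = q + i then f \<otimes> v (q + i) else \<zero>)"
    by (rule R.finsum_cong') (use f_lifted_pres[OF psi True] v f_closed True in auto)
  also have "\<dots> = f \<otimes> v (q + i)"
    using R.finsum_unit[of "q + i" "q + p" "f \<otimes> v (q + i)"] v f_closed True by simp
  finally show ?thesis using True by simp
qed (use f_mv[OF is_mat_lifted_pres[OF psi] v] in simp)

lemma mv_h_lifted_pres:
  assumes psi: "is_mat S p q \<psi>" and a: "\<And>j. j < q + p \<Longrightarrow> a j \<in> carrier S"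
  shows "mv S p (q + p) (\<lambda>i j. h (lifted_pres q \<psi> i j)) a = mv S p q \<psi> a"
  unfolding mv_def
proof (intro ext if_cong refl)
  fix i assume i: "i < p"
  have "(\<Oplus>\<^bsub>S\<^esub>j\<in>{..<q + p}. h (lifted_pres q \<psi> i j) \<otimes>\<^bsub>S\<^esub> a j) =
      (\<Oplus>\<^bsub>S\<^esub>j\<in>{..<q + p}. if j < q then \<psi> i j \<otimes>\<^bsub>S\<^esub> a j else \<zero>\<^bsub>S\<^esub>)"
    by (rule S.finsum_cong') (use h_lifted_pres[OF psi i] a psi i in \<open>auto simp: is_mat_def\<close>)
  also have "\<dots> = (\<Oplus>\<^bsub>S\<^esub>j\<in>{..<q}. \<psi> i j \<otimes>\<^bsub>S\<^esub> a j)"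
    by (rule S.finsum_prefix) (use a psi i in \<open>auto simp: is_mat_def\<close>)
  finally show "(\<Oplus>\<^bsub>S\<^esub>j\<in>{..<q + p}. h (lifted_pres q \<psi> i j) \<otimes>\<^bsub>S\<^esub> a j) = (\<Oplus>\<^bsub>S\<^esub>j\<in>{..<q}. \<psi> i j \<otimes>\<^bsub>S\<^esub> a j)" .
qed

lemma vmap_mv_lifted_pres:
  assumes psi: "is_mat S p q \<psi>" and w: "\<And>j. w j \<in> carrier R"
  shows "vmap (mv R p (q + p) (lifted_pres q \<psi>) w) = mv S p q \<psi> (vmap w)"
  using vmap_mv[OF is_mat_lifted_pres[OF psi], of w] mv_h_lifted_pres[OF psi, of "vmap w"] w
  by (simp add: vmap_def)

lemma mimg_lifted_pres_iff:
  assumes psi: "is_mat S p q \<psi>" and v: "v \<in> fvec R p"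
  shows "v \<in> mimg R p (q + p) (lifted_pres q \<psi>) \<longleftrightarrow> vmap v \<in> mimg S p q \<psi>"
proof
  assume "v \<in> mimg R p (q + p) (lifted_pres q \<psi>)"
  then obtain w where w: "w \<in> fvec R (q + p)" "v = mv R p (q + p) (lifted_pres q \<psi>) w" unfolding mimg_def by blast
  then show "vmap v \<in> mimg S p q \<psi>"
    using vmap_mv_lifted_pres[OF psi] S.mv_in_mimg[OF psi] R.fvec_closed[OF w(1)] by (simp add: vmap_def)
next
  assume "vmap v \<in> mimg S p q \<psi>"
  then obtain a where a: "a \<in> fvec S q" "vmap v = mv S p q \<psi> a" unfolding mimg_def by blast
  have ac: "\<And>j. a j \<in> carrier S" using S.fvec_closed[OF a(1)] .
  have vc: "\<And>j. v j \<in> carrier R" using R.fvec_closed[OF v] .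
  \<comment> \<open>Lift \<open>a\<close> into the first \<open>q\<close> coordinates and use the extra columns for the \<open>f R\<close>-part of \<open>v\<close>.\<close>
  define w where "w j = (if j < q then lift (a j) else if j < q + p then v (j - q) else \<zero>)" for j
  have wc: "\<And>j. w j \<in> carrier R" unfolding w_def using lift_closed ac vc by auto
  have wf: "w \<in> fvec R (q + p)" unfolding fvec_def using wc by (auto simp: w_def)
  have "vtrunc S q (vmap w) = a"
    using a(1) h_lift ac unfolding vtrunc_def vmap_def w_def fvec_def by auto
  then have "vmap (mv R p (q + p) (lifted_pres q \<psi>) w) = vmap v"
    using vmap_mv_lifted_pres[OF psi wc] S.mv_vtrunc[OF psi, of "vmap w"] wc a(2) by (simp add: vmap_def)
  moreover have "f \<otimes> mv R p (q + p) (lifted_pres q \<psi>) w i = f \<otimes> v i" for i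
    using f_mv_lifted_pres[OF psi, of w i] wc v f_closed by (auto simp: w_def fvec_def)
  ultimately have "mv R p (q + p) (lifted_pres q \<psi>) w = v"
    using vec_eq_by_components R.mv_closed[OF is_mat_lifted_pres[OF psi]] wc vc by blast
  then show "v \<in> mimg R p (q + p) (lifted_pres q \<psi>)" unfolding mimg_def using wf by blast
qed

lemma pres_nonzero_lifted:
  assumes "pres_nonzero S p q \<psi>"
  shows "pres_nonzero R p (q + p) (lifted_pres q \<psi>)"
proof -
  have psi: "is_mat S p q \<psi>" and ne: "mimg S p q \<psi> \<noteq> fvec S p" using assms unfolding pres_nonzero_def by auto
  then obtain t where t: "t \<in> fvec S p" "t \<notin> mimg S p q \<psi>" using S.mimg_subset by blast
  then have "vlift t \<notin> mimg R p (q + p) (lifted_pres q \<psi>)"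
    using mimg_lifted_pres_iff[OF psi fvec_vlift[OF t(1)]] vmap_vlift[OF t(1)] by simp
  then show ?thesis unfolding pres_nonzero_def using is_mat_lifted_pres[OF psi] fvec_vlift[OF t(1)] by blast
qed

lemma ext_nonzero_lifted:
  assumes d: "\<And>k. is_mat S (r k) (r (Suc k)) (d k)" and psi: "is_mat S p q \<psi>"
  shows "ext_nonzero R (padded_rank r) (lifted_diff r d) p (q + p) (lifted_pres q \<psi>) k \<longleftrightarrow> ext_nonzero S r d p q \<psi> k"
proof -
  have hD: "(\<lambda>k i j. h (lifted_diff r d k i j)) = padded_diff S r d"
    using h_lifted_diff[of r _ d, OF d] by (intro ext) blast
  have "ext_nonzero R (padded_rank r) (lifted_diff r d) p (q + p) (lifted_pres q \<psi>) k \<longleftrightarrow>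
      ext_nonzero S (padded_rank r) (\<lambda>k i j. h (lifted_diff r d k i j)) p q \<psi> k"
    by (rule ext_nonzero_vmap) (use is_mat_lifted_diff[of r _ d, OF d] mimg_lifted_pres_iff[OF psi] in auto)
  also have "\<dots> \<longleftrightarrow> ext_nonzero S r d p q \<psi> k" unfolding hD using S.ext_nonzero_padded[of r d, OF d psi] .
  finally show ?thesis .
qed

context
  fixes r d
  assumes d: "\<And>k. is_mat S (r k) (r (Suc k)) (d k)"
begin

lemma lifted_preimage:
  assumes b: "b \<in> fvec S (padded_rank r (Suc (Suc k)))" and a: "a \<in> fvec R (padded_rank r (Suc k))"
    and ab: "vmap a = mv S (padded_rank r (Suc k)) (padded_rank r (Suc (Suc k))) (padded_diff S r d (Suc k)) b"
    and fa: "\<And>i. i < r k + mid_rank r k \<Longrightarrow> f \<otimes> a (r (Suc k) + mid_rank r (Suc k) + i) = \<zero>"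
  shows "a \<in> mimg R (padded_rank r (Suc k)) (padded_rank r (Suc (Suc k))) (lifted_diff r d (Suc k))"
proof -
  have ac: "\<And>j. a j \<in> carrier R" using R.fvec_closed[OF a] .
  have bc: "\<And>j. b j \<in> carrier S" using S.fvec_closed[OF b] .
  \<comment> \<open>Lift \<open>b\<close> and put the \<open>f R\<close>-part of \<open>a\<close>, which lives on its first two blocks, into the tail block.\<close>
  define o2 where "o2 = r (Suc (Suc k)) + mid_rank r (Suc (Suc k))"
  define w where "w j = lift (b j) \<oplus> (if o2 \<le> j \<and> j < padded_rank r (Suc (Suc k)) then f \<otimes> a (j - o2) else \<zero>)" for j
  have wc: "\<And>j. w j \<in> carrier R" unfolding w_def using lift_closed bc f_closed ac by auto
  have w: "w \<in> fvec R (padded_rank r (Suc (Suc k)))"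
    unfolding fvec_def
  proof (intro CollectI conjI allI impI)
    fix i assume "padded_rank r (Suc (Suc k)) \<le> i"
    then show "w i = \<zero>" using b lift_zero unfolding w_def fvec_def by simp
  qed (rule wc)
  have "vmap w = b" unfolding vmap_def w_def using h_lift bc lift_closed f_closed ac h_f by (auto simp: fun_eq_iff)
  then have vm: "vmap (mv R (padded_rank r (Suc k)) (padded_rank r (Suc (Suc k))) (lifted_diff r d (Suc k)) w) = vmap a"
    using vmap_mv_lifted_diff[of r d w "Suc k", OF d wc] ab by simp
  have fm: "f \<otimes> mv R (padded_rank r (Suc k)) (padded_rank r (Suc (Suc k))) (lifted_diff r d (Suc k)) w i = f \<otimes> a i"
    for i
  proof (cases "i < r (Suc k) + mid_rank r (Suc k)")
    case True
    have "o2 + i < padded_rank r (Suc (Suc k))" using True unfolding o2_def padded_rank_def by (simp add: tail_rank_Suc)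
    then have "f \<otimes> w (o2 + i) = f \<otimes> a i"
      unfolding w_def using f_lift bc lift_closed f_closed ac by (simp add: R.r_distr R.m_assoc[symmetric] f_idem)
    then show ?thesis using f_mv_lifted_diff[of r "Suc k" d w i, OF d] wc True unfolding o2_def by simp
  next
    case False
    have "f \<otimes> a i = \<zero>"
    proof (cases "i < padded_rank r (Suc k)")
      case True
      then show ?thesis using fa[of "i - (r (Suc k) + mid_rank r (Suc k))"] False
        by (simp add: padded_rank_def tail_rank_Suc)
    qed (use a f_closed in \<open>simp add: fvec_def\<close>)
    then show ?thesis using f_mv_lifted_diff[of r "Suc k" d w i, OF d] wc False by simp
  qed
  have "mv R (padded_rank r (Suc k)) (padded_rank r (Suc (Suc k))) (lifted_diff r d (Suc k)) w = a"
    by (rule vec_eq_by_components[OF _ _ vm fm])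
      (use R.mv_closed[OF is_mat_lifted_diff[of r "Suc k" d, OF d]] wc ac in auto)
  then show ?thesis unfolding mimg_def using w by blast
qed

lemma lifted_kernel_in_image:
  assumes ex: "{v \<in> fvec S (padded_rank r (Suc k)). mv S (padded_rank r k) (padded_rank r (Suc k)) (padded_diff S r d k) v = (\<lambda>_. \<zero>\<^bsub>S\<^esub>)}
      = mimg S (padded_rank r (Suc k)) (padded_rank r (Suc (Suc k))) (padded_diff S r d (Suc k))"
    and a: "a \<in> fvec R (padded_rank r (Suc k))"
    and a0: "mv R (padded_rank r k) (padded_rank r (Suc k)) (lifted_diff r d k) a = (\<lambda>_. \<zero>)"
  shows "a \<in> mimg R (padded_rank r (Suc k)) (padded_rank r (Suc (Suc k))) (lifted_diff r d (Suc k))"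
proof -
  have ac: "\<And>j. a j \<in> carrier R" using R.fvec_closed[OF a] .
  have "mv S (padded_rank r k) (padded_rank r (Suc k)) (padded_diff S r d k) (vmap a) = (\<lambda>_. \<zero>\<^bsub>S\<^esub>)"
    using vmap_mv_lifted_diff[of r d a k, OF d ac] a0 by (simp add: vmap_zero)
  then have "vmap a \<in> mimg S (padded_rank r (Suc k)) (padded_rank r (Suc (Suc k))) (padded_diff S r d (Suc k))"
    using ex fvec_vmap[OF a] by blast
  then obtain b where b: "b \<in> fvec S (padded_rank r (Suc (Suc k)))"
    and ab: "vmap a = mv S (padded_rank r (Suc k)) (padded_rank r (Suc (Suc k))) (padded_diff S r d (Suc k)) b"
    unfolding mimg_def by blast
  have "f \<otimes> a (r (Suc k) + mid_rank r (Suc k) + i) = \<zero>" if "i < r k + mid_rank r k" for i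
    using f_mv_lifted_diff[of r k d a i, OF d] a0 ac that f_closed by simp
  then show ?thesis by (rule lifted_preimage[OF b a ab])
qed

lemma lifted_image_in_kernel:
  assumes ex: "mimg S (padded_rank r (Suc k)) (padded_rank r (Suc (Suc k))) (padded_diff S r d (Suc k))
      \<subseteq> {v \<in> fvec S (padded_rank r (Suc k)). mv S (padded_rank r k) (padded_rank r (Suc k)) (padded_diff S r d k) v = (\<lambda>_. \<zero>\<^bsub>S\<^esub>)}"
    and a: "a \<in> mimg R (padded_rank r (Suc k)) (padded_rank r (Suc (Suc k))) (lifted_diff r d (Suc k))"
  shows "a \<in> fvec R (padded_rank r (Suc k))"
    and "mv R (padded_rank r k) (padded_rank r (Suc k)) (lifted_diff r d k) a = (\<lambda>_. \<zero>)"
proof -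
  obtain w where w: "w \<in> fvec R (padded_rank r (Suc (Suc k)))"
    and aw: "a = mv R (padded_rank r (Suc k)) (padded_rank r (Suc (Suc k))) (lifted_diff r d (Suc k)) w"
    using a unfolding mimg_def by blast
  have wc: "\<And>j. w j \<in> carrier R" using R.fvec_closed[OF w] .
  show af: "a \<in> fvec R (padded_rank r (Suc k))"
    unfolding aw using R.mv_fvec[OF is_mat_lifted_diff[of r "Suc k" d, OF d]] wc by blast
  have ac: "\<And>j. a j \<in> carrier R" using R.fvec_closed[OF af] .
  have "vmap a = mv S (padded_rank r (Suc k)) (padded_rank r (Suc (Suc k))) (padded_diff S r d (Suc k)) (vmap w)"
    using vmap_mv_lifted_diff[of r d w "Suc k", OF d wc] aw by simp
  then have "vmap a \<in> mimg S (padded_rank r (Suc k)) (padded_rank r (Suc (Suc k))) (padded_diff S r d (Suc k))"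
    unfolding mimg_def using fvec_vmap[OF w] by blast
  then have "mv S (padded_rank r k) (padded_rank r (Suc k)) (padded_diff S r d k) (vmap a) = (\<lambda>_. \<zero>\<^bsub>S\<^esub>)"
    using ex by blast
  then have vm: "vmap (mv R (padded_rank r k) (padded_rank r (Suc k)) (lifted_diff r d k) a) = vmap (\<lambda>_. \<zero>)"
    using vmap_mv_lifted_diff[of r d a k, OF d ac] by (simp add: vmap_zero)
  have fm: "f \<otimes> mv R (padded_rank r k) (padded_rank r (Suc k)) (lifted_diff r d k) a i = f \<otimes> \<zero>" for i
  proof -
    have "f \<otimes> a (r (Suc k) + mid_rank r (Suc k) + i) = \<zero>"
      using f_mv_lifted_diff[of r "Suc k" d w "r (Suc k) + mid_rank r (Suc k) + i", OF d] wc aw by simp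
    then show ?thesis using f_mv_lifted_diff[of r k d a i, OF d] ac f_closed by simp
  qed
  show "mv R (padded_rank r k) (padded_rank r (Suc k)) (lifted_diff r d k) a = (\<lambda>_. \<zero>)"
    by (rule vec_eq_by_components[OF _ _ vm fm]) (use R.mv_closed[OF is_mat_lifted_diff[of r k d, OF d]] ac in auto)
qed

end

lemma free_resolution_lifted:
  assumes F: "free_resolution S r d"
  shows "free_resolution R (padded_rank r) (lifted_diff r d)"
  unfolding free_resolution_def
proof (intro conjI allI)
  fix k
  have d: "\<And>k. is_mat S (r k) (r (Suc k)) (d k)" using F unfolding free_resolution_def by blast
  have ex: "{v \<in> fvec S (padded_rank r (Suc k)). mv S (padded_rank r k) (padded_rank r (Suc k)) (padded_diff S r d k) v = (\<lambda>_. \<zero>\<^bsub>S\<^esub>)}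
      = mimg S (padded_rank r (Suc k)) (padded_rank r (Suc (Suc k))) (padded_diff S r d (Suc k))"
    using S.free_resolution_padded[OF d F] unfolding free_resolution_def by blast
  show "is_mat R (padded_rank r k) (padded_rank r (Suc k)) (lifted_diff r d k)"
    using is_mat_lifted_diff[of r k d, OF d] .
  show "{v \<in> fvec R (padded_rank r (Suc k)). mv R (padded_rank r k) (padded_rank r (Suc k)) (lifted_diff r d k) v = (\<lambda>_. \<zero>)}
      = mimg R (padded_rank r (Suc k)) (padded_rank r (Suc (Suc k))) (lifted_diff r d (Suc k))"
    using lifted_kernel_in_image[OF d ex] lifted_image_in_kernel[OF d equalityD2[OF ex]] by blast
qed

lemma res_nonzero_lifted:
  assumes F: "free_resolution S r d" and N: "res_nonzero S r d"
  shows "res_nonzero R (padded_rank r) (lifted_diff r d)"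
  unfolding res_nonzero_def
proof
  have d: "\<And>k. is_mat S (r k) (r (Suc k)) (d k)" using F unfolding free_resolution_def by blast
  obtain t where t: "t \<in> fvec S (r 0)" "t \<notin> mimg S (r 0) (r 1) (d 0)"
    using N S.mimg_subset[OF d[of 0]] unfolding res_nonzero_def by auto
  assume "mimg R (padded_rank r 0) (padded_rank r 1) (lifted_diff r d 0) = fvec R (padded_rank r 0)"
  moreover have "vlift t \<in> fvec R (padded_rank r 0)" using fvec_vlift[OF t(1)] by simp
  ultimately obtain w where w: "w \<in> fvec R (padded_rank r 1)"
    and tw: "vlift t = mv R (padded_rank r 0) (padded_rank r 1) (lifted_diff r d 0) w"
    unfolding mimg_def by blast
  have wc: "\<And>j. w j \<in> carrier R" using R.fvec_closed[OF w] .
  have "t = mv S (padded_rank r 0) (padded_rank r 1) (padded_diff S r d 0) (vmap w)"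
    using vmap_mv_lifted_diff[of r d w 0, OF d wc] tw vmap_vlift[OF t(1)] by simp
  also have "\<dots> = mv S (r 0) (r 1) (d 0) (vmap w)"
  proof
    fix i
    show "mv S (padded_rank r 0) (padded_rank r 1) (padded_diff S r d 0) (vmap w) i = mv S (r 0) (r 1) (d 0) (vmap w) i"
      using S.mv_padded_diff_top[of r d 0 "vmap w" i, OF d] wc
      by (cases "i < r 0") (auto simp: mv_def vmap_def)
  qed
  finally have "t \<in> mimg S (r 0) (r 1) (d 0)" using S.mv_in_mimg[OF d[of 0]] wc by (simp add: vmap_def)
  then show False using t(2) by simp
qed

lemma ext_sup_lifted:
  assumes F: "free_resolution S r d" and psi: "is_mat S p q \<psi>"
  shows "ext_sup R (padded_rank r) (lifted_diff r d) p (q + p) (lifted_pres q \<psi>) = ext_sup S r d p q \<psi>"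
proof -
  have d: "\<And>k. is_mat S (r k) (r (Suc k)) (d k)" using F unfolding free_resolution_def by blast
  have "{k. ext_nonzero R (padded_rank r) (lifted_diff r d) p (q + p) (lifted_pres q \<psi>) k}
      = {k. ext_nonzero S r d p q \<psi> k}"
    using ext_nonzero_lifted[of r d, OF d psi] by blast
  then show ?thesis unfolding ext_sup_def by simp
qed

lemma ext_index_le: "ext_index S \<le> ext_index R"
  unfolding ext_index_def
proof (rule Sup_least)
  fix x assume "x \<in> {ext_sup S r d p q \<psi> | r d p q \<psi>.
      free_resolution S r d \<and> res_nonzero S r d \<and> pres_nonzero S p q \<psi> \<and> ext_sup S r d p q \<psi> < \<infinity>}"
  then obtain r d p q \<psi> where x: "x = ext_sup S r d p q \<psi>" and F: "free_resolution S r d"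
    and N: "res_nonzero S r d" and Q: "pres_nonzero S p q \<psi>" and fin: "ext_sup S r d p q \<psi> < \<infinity>"
    by blast
  have "ext_sup R (padded_rank r) (lifted_diff r d) p (q + p) (lifted_pres q \<psi>) = x"
    using ext_sup_lifted[OF F] Q x unfolding pres_nonzero_def by simp
  then have "x \<in> {ext_sup R r d p q \<psi> | r d p q \<psi>.
      free_resolution R r d \<and> res_nonzero R r d \<and> pres_nonzero R p q \<psi> \<and> ext_sup R r d p q \<psi> < \<infinity>}"
    using free_resolution_lifted[OF F] res_nonzero_lifted[OF F N] pres_nonzero_lifted[OF Q] fin x by force
  then show "x \<le> Sup {ext_sup R r d p q \<psi> | r d p q \<psi>.
      free_resolution R r d \<and> res_nonzero R r d \<and> pres_nonzero R p q \<psi> \<and> ext_sup R r d p q \<psi> < \<infinity>}"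
    by (rule Sup_upper)
qed

end

theorem corollary2p3:
  fixes R :: "('a, 'm) ring_scheme" and P :: "'a set"
  assumes "cring R" and "noetherian_ring R" and "artinian_ring R"
    and "finite_ext_index R"
    and "primeideal P R"
  shows "finite_ext_index (localization R P)"
proof -
  interpret artinian_localization P R
    using assms(2,3,5) by (intro artinian_localization.intro artinian_localization_axioms.intro)
  obtain e where e: "e \<in> carrier R" "e \<otimes>\<^bsub>R\<^esub> e = e" "loc_map e = \<one>\<^bsub>S\<^esub>"
    "\<And>x. x \<in> carrier R \<Longrightarrow> loc_map x = \<zero>\<^bsub>S\<^esub> \<Longrightarrow> e \<otimes>\<^bsub>R\<^esub> x = \<zero>\<^bsub>R\<^esub>"
    by (rule localization_idempotent) (rule that)
  interpret direct_factor R S loc_map e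
  proof (intro direct_factor.intro direct_factor_axioms.intro ring_hom_cring.intro ring_hom_cring_axioms.intro)
    show "carrier S \<subseteq> loc_map ` carrier R" by (simp add: carrier_localization)
  qed (fact assms(1) cring_localization loc_map_ring_hom e)+
  have "ext_index S \<le> ext_index R" by (rule ext_index_le)
  then show ?thesis using assms(4) unfolding finite_ext_index_def by (rule le_less_trans)
qed

end
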